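(* In the setting described in the context, suppose that the closed-loop system $\Sigma_0$ is USGES with functions $r\mapsto M(r)$, $r\mapsto\lambda(r)$ (i.e. $\|\phi^{\Sigma_0}(t,x,\sigma)\|\le M(r)e^{-\lambda(r)t}\|x\|$ for all $r>0$, $t\ge0$, $x\in B_X(0,r)$, $\sigma\in\mathrm{PC}$) satisfying $\lim_{r\to\infty}\frac{r}{M(r)}=+\infty$. Then for every $r>0$ there exists $\delta^\star(r)>0$ such that the sampled-data system $\Sigma$ is UES in $B_X(0,r)$ whenever the maximal sampling time $\delta=\sup_{k\ge0}(s_{k+1}-s_k)$ of the sampling sequence is smaller than $\delta^\star(r)$.
   Context: $X,U$ are Banach spaces, $B_X(0,r)$ the closed ball of radius $r$. $A$ is the infinitesimal generator of a $C_0$-group $(T_t)_{t\in\mathbb{R}}$ of bounded linear operators on $X$. $\mathcal{Q}$ is a nonempty set, $\mathrm{PC}$ the set of piecewise constant $\sigma:\mathbb{R}_+\to\mathcal{Q}$. For $q\in\mathcal{Q}$, $f_q:X\times U\to X$ is Lipschitz with constant $L_f>0$ independent of $q$ and $f_q(0,0)=0$; $K:X\to U$ is globally Lipschitz with $K(0)=0$. Closed-loop system $\Sigma_0$: for $q\in\mathcal{Q}$, $T_q(t)x_0$ is the mild solution $x(t)=T_tx_0+\int_0^tT_{t-s}f_q(x(s),K(x(s)))ds$, and for $\sigma\in\mathrm{PC}$ equal to $q_k$ on $[t_k,t_{k+1})$ ($0=t_0<t_1<\cdots\to\infty$), $\phi^{\Sigma_0}(t,x_0,\sigma)=T_{q_k}(t-t_k)T_{q_{k-1}}(t_k-t_{k-1})\cdots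 T_{q_0}(t_1)x_0$ for $t\in[t_k,t_{k+1})$. Sampled-data system $\Sigma$: given sampling instants $s_0=0<s_1<\cdots$ with $s_k\to\infty$, $\phi^\Sigma(t,x_0,\sigma)=x^\Sigma(t)$, where $x^\Sigma$ is the unique continuous function with $x^\Sigma(0)=x_0$ and, for $k\ge0$, $s_k\le t<s_{k+1}$, $x^\Sigma(t)=T_{t-s_k}x^\Sigma(s_k)+\int_0^{t-s_k}T_{t-s_k-s}f_{\sigma(s+s_k)}(x^\Sigma(s+s_k),K(T_sx^\Sigma(s_k)))ds$ (mild solution of $\dot x=Ax+f_{\sigma(t)}(x,K(T_{t-s_k}x(s_k)))$). $\Sigma$ is UES in $B_X(0,r)$ if there exist $M,\lambda>0$ with $\|\phi^\Sigma(t,x,\sigma)\|\le Me^{-\lambda t}\|x\|$ for all $t\ge0$, $x\in B_X(0,r)$, $\sigma\in\mathrm{PC}$. *)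

theory Defs
  imports "HOL-Analysis.Analysis"
begin

text \<open>Strongly continuous (C0) group of bounded linear operators on X.
  (Its infinitesimal generator A is determined by the group and does not
  otherwise enter the statement.)\<close>
definition C0_group :: "(real \<Rightarrow> 'x::banach \<Rightarrow> 'x) \<Rightarrow> bool" where
  "C0_group T \<longleftrightarrow>
     (\<forall>t. bounded_linear (T t)) \<and> T 0 = id \<and>
     (\<forall>s t. T (s + t) = T s \<circ> T t) \<and>
     (\<forall>x. continuous_on UNIV (\<lambda>t. T t x))"

definition time_seq :: "(nat \<Rightarrow> real) \<Rightarrow> bool" where
  "time_seq tt \<longleftrightarrow> tt 0 = 0 \<and> strict_mono tt \<and> filterlim tt at_top sequentially"

definition adapted_switching :: "(real \<Rightarrow> 'q) \<Rightarrow> (nat \<Rightarrow> real) \<Rightarrow> bool" where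
  "adapted_switching \<sigma> tt \<longleftrightarrow> time_seq tt \<and>
     (\<forall>k t. tt k \<le> t \<and> t < tt (Suc k) \<longrightarrow> \<sigma> t = \<sigma> (tt k))"

text \<open>Piecewise constant switching signals R_+ \<rightarrow> Q (values on negative times irrelevant).\<close>
definition PC :: "(real \<Rightarrow> 'q) set" where
  "PC = {\<sigma>. \<exists>tt. adapted_switching \<sigma> tt}"

text \<open>y is the trajectory phi^{Sigma_0}(., x0, sigma) of the closed-loop system:
  on each switching interval [t_k,t_{k+1}) it is the mild solution of mode q_k
  started at y(t_k), i.e. y(t) = T_{q_k}(t - t_k) y(t_k).\<close>
definition closed_loop_traj ::
  "(real \<Rightarrow> 'x::banach \<Rightarrow> 'x) \<Rightarrow> ('q \<Rightarrow> 'x \<Rightarrow> 'u \<Rightarrow> 'x) \<Rightarrow> ('x \<Rightarrow> 'u)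
    \<Rightarrow> (real \<Rightarrow> 'q) \<Rightarrow> 'x \<Rightarrow> (real \<Rightarrow> 'x) \<Rightarrow> bool" where
  "closed_loop_traj T f K \<sigma> x0 y \<longleftrightarrow>
     continuous_on {0..} y \<and> y 0 = x0 \<and>
     (\<exists>tt. adapted_switching \<sigma> tt \<and>
        (\<forall>k t. tt k \<le> t \<and> t < tt (Suc k) \<longrightarrow>
           ((\<lambda>s. T (t - tt k - s) (f (\<sigma> (tt k)) (y (s + tt k)) (K (y (s + tt k)))))
              has_integral (y t - T (t - tt k) (y (tt k)))) {0..t - tt k}))"

definition sampled_traj ::
  "(real \<Rightarrow> 'x::banach \<Rightarrow> 'x) \<Rightarrow> ('q \<Rightarrow> 'x \<Rightarrow> 'u \<Rightarrow> 'x) \<Rightarrow> ('x \<Rightarrow> 'u)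
    \<Rightarrow> (nat \<Rightarrow> real) \<Rightarrow> (real \<Rightarrow> 'q) \<Rightarrow> 'x \<Rightarrow> (real \<Rightarrow> 'x) \<Rightarrow> bool" where
  "sampled_traj T f K sk \<sigma> x0 y \<longleftrightarrow>
     continuous_on {0..} y \<and> y 0 = x0 \<and>
     (\<forall>k t. sk k \<le> t \<and> t < sk (Suc k) \<longrightarrow>
        ((\<lambda>s. T (t - sk k - s) (f (\<sigma> (s + sk k)) (y (s + sk k)) (K (T s (y (sk k))))))
           has_integral (y t - T (t - sk k) (y (sk k)))) {0..t - sk k})"

end

theory Submission
  imports Defs
begin

text \<open>Fix a radius \<open>r\<close>. Starting at a sampling instant \<open>s\<^sub>k\<close> with \<open>\<parallel>x(s\<^sub>k)\<parallel> \<le> r\<close>,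
  compare the sampled-data trajectory on a window \<open>[s\<^sub>k, s\<^sub>k + W]\<close> with the closed-loop
  trajectory from the same state, which exists by a Picard iteration. Both are mild solutions whose
  forcings differ by a Lipschitz term in their distance plus the drift of the state between two
  samples, which is of order \<open>\<delta>\<close>; a Gronwall-type estimate bounds their distance by
  \<open>\<delta> Q \<parallel>x(s\<^sub>k)\<parallel>\<close>. Once \<open>M(r) exp (- \<lambda>(r) \<tau>) \<le> 1/4\<close> and \<open>\<delta> Q \<le> 1/4\<close>, the norm has
  at least halved at the first sampling instant after \<open>s\<^sub>k + \<tau>\<close>, and iterating gives exponential decay. The norm at
  these restart instants never exceeds the initial one, so only the closed-loop estimate on the
  ball of radius \<open>r\<close> is used.\<close>

section \<open>Strongly continuous groups\<close>

lemma uniform_boundedness: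
  fixes L :: "'i \<Rightarrow> 'a::banach \<Rightarrow> 'b::real_normed_vector"
  assumes lin: "\<And>i. i \<in> I \<Longrightarrow> bounded_linear (L i)"
    and pointwise: "\<And>v. \<exists>B. \<forall>i\<in>I. norm (L i v) \<le> B"
  shows "\<exists>C. \<forall>i\<in>I. \<forall>v. norm (L i v) \<le> C * norm v"
proof -
  define E where "E n = {v. \<forall>i\<in>I. norm (L i v) \<le> real n}" for n :: nat
  have closed_E: "closed (E n)" for n
  proof -
    have "E n = (\<Inter>i\<in>I. {v. norm (L i v) \<le> real n})"
      by (auto simp: E_def)
    moreover have "closed {v. norm (L i v) \<le> real n}" if "i \<in> I" for i
      using lin[OF that] by (intro closed_Collect_le continuous_intros linear_continuous_on) 
    ultimately show ?thesis by auto
  qed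
  have "\<Union>(range E) = UNIV"
  proof safe
    fix v :: 'a
    obtain B where "\<forall>i\<in>I. norm (L i v) \<le> B" using pointwise by blast
    then have "v \<in> E (nat \<lceil>B\<rceil>)"
      unfolding E_def by (auto intro: order_trans[OF _ real_nat_ceiling_ge])
    then show "v \<in> \<Union>(range E)" by blast
  qed simp
  then have "\<exists>n. interior (E n) \<noteq> {}"
    using Baire_category_alt[of euclidean "range E"] completely_metrizable_space_euclidean
      closed_E closed_closedin by fastforce
  then obtain n v0 e where e: "e > 0" "ball v0 e \<subseteq> E n"
    using mem_interior by blast
  have "norm (L i v) \<le> 4 * real n / e * norm v" if i: "i \<in> I" for i v
  proof (cases "v = 0")
    case True
    then show ?thesis using linear_simps(3)[OF lin[OF i]] by simp
  next
    case False
    interpret bounded_linear "L i" by (rule lin[OF i])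
    define u where "u = (e / 2 / norm v) *\<^sub>R v"
    have "norm u = e / 2" using False e by (simp add: u_def)
    then have "v0 + u \<in> E n" "v0 \<in> E n"
      using e by (auto intro!: subsetD[OF e(2)] simp: dist_norm)
    then have "norm (L i (v0 + u)) \<le> n" "norm (L i v0) \<le> n"
      using i by (auto simp: E_def)
    then have Lu: "norm (L i u) \<le> 2 * real n"
      using norm_triangle_ineq4[of "L i (v0 + u)" "L i v0"] by (simp add: add)
    have "L i v = (2 * norm v / e) *\<^sub>R L i u"
      using False e by (simp add: u_def scaleR)
    then have "norm (L i v) = (2 * norm v / e) * norm (L i u)"
      using e by simp
    also have "\<dots> \<le> (2 * norm v / e) * (2 * real n)"
      using Lu e by (intro mult_left_mono) auto
    finally show ?thesis by (simp add: field_simps)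
  qed
  then show ?thesis by blast
qed

lemma C0_group_bounded_linear: "C0_group T \<Longrightarrow> bounded_linear (T t)"
  by (simp add: C0_group_def)

lemma C0_group_zero: "C0_group T \<Longrightarrow> T 0 v = v"
  by (simp add: C0_group_def)

lemma C0_group_comp: "C0_group T \<Longrightarrow> T s (T t v) = T (s + t) v"
  by (simp add: C0_group_def)

lemma C0_group_continuous: "C0_group T \<Longrightarrow> continuous_on UNIV (\<lambda>t. T t v)"
  by (simp add: C0_group_def)

lemmas C0_group_linear_simps = linear_simps[OF C0_group_bounded_linear]

lemma C0_group_bounded_near_0:
  fixes T :: "real \<Rightarrow> 'x::banach \<Rightarrow> 'x"
  assumes G: "C0_group T"
  shows "\<exists>C\<ge>1. \<forall>t\<in>{-1..1}. \<forall>v. norm (T t v) \<le> C * norm v"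
proof -
  have "\<exists>B. \<forall>t\<in>{-1..1}. norm (T t v) \<le> B" for v
  proof -
    have "compact ((\<lambda>t. T t v) ` {-1..1})"
      by (rule compact_continuous_image) (auto intro: continuous_on_subset[OF C0_group_continuous[OF G]])
    then obtain B where "\<forall>w\<in>(\<lambda>t. T t v) ` {-1..1}. norm w \<le> B"
      using compact_imp_bounded bounded_iff by metis
    then show ?thesis by auto
  qed
  then obtain C where "\<forall>t\<in>{-1..1}. \<forall>v. norm (T t v) \<le> C * norm v"
    using uniform_boundedness[of "{-1..1}" T] C0_group_bounded_linear[OF G] by blast
  moreover have "C * norm v \<le> max 1 C * norm v" for v :: 'x
    by (intro mult_right_mono) auto
  ultimately have "\<forall>t\<in>{-1..1}. \<forall>v. norm (T t v) \<le> max 1 C * norm v"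
    by (meson order_trans)
  then show ?thesis by (intro exI[of _ "max 1 C"]) auto
qed

text \<open>Iterating the bound on \<open>[-1, 1]\<close> over the integer part of \<open>|t|\<close>.\<close>
lemma C0_group_exp_bound:
  fixes T :: "real \<Rightarrow> 'x::banach \<Rightarrow> 'x"
  assumes G: "C0_group T"
  shows "\<exists>C \<omega>. C \<ge> 1 \<and> \<omega> \<ge> 0 \<and> (\<forall>t v. norm (T t v) \<le> C * exp (\<omega> * \<bar>t\<bar>) * norm v)"
proof -
  obtain C where C: "C \<ge> 1" "\<forall>t\<in>{-1..1}. \<forall>v. norm (T t v) \<le> C * norm v"
    using C0_group_bounded_near_0[OF G] by blast
  have power_bound: "\<bar>t\<bar> \<le> real n + 1 \<Longrightarrow> norm (T t v) \<le> C ^ (n + 1) * norm v" for n t v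
  proof (induction n arbitrary: t v)
    case 0
    then show ?case using C by (auto simp: abs_le_iff)
  next
    case (Suc n)
    define s where "s = max (-1) (min 1 t)"
    have s: "s \<in> {-1..1}" "\<bar>t - s\<bar> \<le> real n + 1"
      using Suc.prems by (auto simp: s_def abs_le_iff)
    have "norm (T t v) = norm (T s (T (t - s) v))"
      using C0_group_comp[OF G, of s "t - s" v] by simp
    also have "\<dots> \<le> C * norm (T (t - s) v)" using C s by simp
    also have "\<dots> \<le> C * (C ^ (n + 1) * norm v)"
      using Suc.IH s C by (intro mult_left_mono) auto
    finally show ?case by simp
  qed
  have "norm (T t v) \<le> C * exp (ln C * \<bar>t\<bar>) * norm v" for t v
  proof -
    define n where "n = nat \<lfloor>\<bar>t\<bar>\<rfloor>"
    have n: "\<bar>t\<bar> \<le> real n + 1" "real n \<le> \<bar>t\<bar>" unfolding n_def by linarith+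
    have "C ^ n = exp (ln C * real n)"
      using C by (simp add: mult.commute exp_of_nat_mult)
    also have "\<dots> \<le> exp (ln C * \<bar>t\<bar>)"
      using C n by (auto intro: mult_left_mono)
    finally have "C ^ (n + 1) * norm v \<le> C * exp (ln C * \<bar>t\<bar>) * norm v"
      using C by (auto intro!: mult_right_mono mult_left_mono)
    then show ?thesis using power_bound[OF n(1), of v] by linarith
  qed
  then show ?thesis using C by (intro exI[of _ C] exI[of _ "ln C"]) auto
qed

lemma continuous_on_C0_group:
  fixes T :: "real \<Rightarrow> 'x::banach \<Rightarrow> 'x"
  assumes G: "C0_group T" and \<phi>: "continuous_on S \<phi>" and u: "continuous_on S u"
  shows "continuous_on S (\<lambda>s. T (\<phi> s) (u s))"
  unfolding continuous_on_def
proof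
  fix x assume x: "x \<in> S"
  obtain C \<omega> where C: "\<And>t v. norm (T t v) \<le> C * exp (\<omega> * \<bar>t\<bar>) * norm v"
    using C0_group_exp_bound[OF G] by blast
  have "continuous_on S (\<lambda>s. T (\<phi> s) (u x))"
    by (rule continuous_on_compose2[OF C0_group_continuous[OF G] \<phi>]) auto
  then have fixed: "((\<lambda>s. T (\<phi> s) (u x)) \<longlongrightarrow> T (\<phi> x) (u x)) (at x within S)"
    using x unfolding continuous_on_def by blast
  have "((\<lambda>s. C * exp (\<omega> * \<bar>\<phi> s\<bar>) * norm (u s - u x)) \<longlongrightarrow> C * exp (\<omega> * \<bar>\<phi> x\<bar>) * norm (u x - u x)) (at x within S)"
    using x u \<phi> unfolding continuous_on_def by (intro tendsto_intros) auto
  then have "((\<lambda>s. C * exp (\<omega> * \<bar>\<phi> s\<bar>) * norm (u s - u x)) \<longlongrightarrow> 0) (at x within S)"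
    by simp
  then have "((\<lambda>s. T (\<phi> s) (u s - u x)) \<longlongrightarrow> 0) (at x within S)"
    by (rule Lim_null_comparison[rotated]) (auto intro!: always_eventually C)
  from tendsto_add[OF this fixed]
  show "((\<lambda>s. T (\<phi> s) (u s)) \<longlongrightarrow> T (\<phi> x) (u x)) (at x within S)"
    by (simp add: C0_group_linear_simps[OF G])
qed

lemma has_integral_C0_group:
  assumes "C0_group T" and "(g has_integral I) S"
  shows "((\<lambda>s. T t (g s)) has_integral T t I) S"
  using has_integral_linear[OF assms(2) C0_group_bounded_linear[OF assms(1)]] by (simp add: o_def)


section \<open>Sampling and switching sequences\<close>

lemma time_seq_mono: "time_seq p \<Longrightarrow> i \<le> j \<Longrightarrow> p i \<le> p j"
  unfolding time_seq_def by (simp add: strict_mono_less_eq)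

lemma time_seq_less: "time_seq p \<Longrightarrow> i < j \<Longrightarrow> p i < p j"
  unfolding time_seq_def by (simp add: strict_mono_less)

lemma time_seq_nonneg: "time_seq p \<Longrightarrow> 0 \<le> p k"
  using time_seq_mono[of p 0 k] by (simp add: time_seq_def)

lemma time_seq_unbounded:
  assumes "time_seq p"
  obtains n where "b < p n"
proof -
  have "eventually (\<lambda>n. b + 1 \<le> p n) sequentially"
    using assms by (simp add: time_seq_def filterlim_at_top)
  then obtain N where "\<forall>n\<ge>N. b + 1 \<le> p n" by (auto simp: eventually_sequentially)
  then have "b + 1 \<le> p N" by simp
  then show ?thesis using that[of N] by linarith
qed

lemma time_seq_interval:
  assumes p: "time_seq p" and s: "0 \<le> s"
  obtains k where "p k \<le> s" "s < p (Suc k)"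
proof -
  obtain n where "s < p n" using time_seq_unbounded[OF p] .
  then have ex: "\<exists>n. s < p n" by blast
  define m where "m = (LEAST n. s < p n)"
  have "s < p m" using LeastI_ex[OF ex] by (simp add: m_def)
  then have "m \<noteq> 0" using s p by (auto simp: time_seq_def intro!: gr0I)
  then obtain k where k: "m = Suc k" using not0_implies_Suc by blast
  have "\<not> s < p k" using not_less_Least[of k "\<lambda>n. s < p n"] k by (simp add: m_def)
  then show ?thesis using that[of k] \<open>s < p m\<close> k by (simp add: not_less)
qed

definition time_seq_index :: "(nat \<Rightarrow> real) \<Rightarrow> real \<Rightarrow> nat" where
  "time_seq_index p s = (THE k. p k \<le> s \<and> s < p (Suc k))"

lemma time_seq_index_eq:
  assumes p: "time_seq p" and "p k \<le> s" "s < p (Suc k)"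
  shows "time_seq_index p s = k"
  unfolding time_seq_index_def
proof (rule the_equality)
  fix j assume j: "p j \<le> s \<and> s < p (Suc j)"
  show "j = k"
  proof (rule ccontr)
    assume "j \<noteq> k"
    then have "Suc j \<le> k \<or> Suc k \<le> j" by linarith
    then show False
      using j assms time_seq_mono[OF p, of "Suc j" k] time_seq_mono[OF p, of "Suc k" j] by auto
  qed
qed (use assms in auto)

lemma time_seq_index:
  assumes "time_seq p" and "0 \<le> s"
  shows "p (time_seq_index p s) \<le> s" "s < p (Suc (time_seq_index p s))"
proof -
  obtain k where k: "p k \<le> s" "s < p (Suc k)" using time_seq_interval[OF assms] .
  then have "time_seq_index p s = k" by (rule time_seq_index_eq[OF assms(1)])
  with k show "p (time_seq_index p s) \<le> s" "s < p (Suc (time_seq_index p s))" by simp_all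
qed

lemma last_sample_before:
  assumes p: "time_seq p" and gaps: "\<forall>k. p (Suc k) - p k \<le> \<delta>" and s: "p m \<le> s"
  shows "p m \<le> p (time_seq_index p s)" "p (time_seq_index p s) \<le> s"
    "s - p (time_seq_index p s) \<le> \<delta>"
proof -
  have "0 \<le> s" using s time_seq_nonneg[OF p, of m] by linarith
  note index = time_seq_index[OF p this]
  show "p (time_seq_index p s) \<le> s" by (fact index(1))
  show "s - p (time_seq_index p s) \<le> \<delta>"
    using index(2) gaps[rule_format, of "time_seq_index p s"] by linarith
  have "m \<le> time_seq_index p s"
  proof (rule ccontr)
    assume "\<not> ?thesis"
    then have "p (Suc (time_seq_index p s)) \<le> p m" using time_seq_mono[OF p] by simp
    then show False using index(2) s by linarith
  qed
  then show "p m \<le> p (time_seq_index p s)" by (rule time_seq_mono[OF p])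
qed

lemma next_sample_after:
  assumes p: "time_seq p" and gaps: "\<forall>k. p (Suc k) - p k \<le> \<delta>" and "0 \<le> b"
  obtains m where "b \<le> p m" "p m \<le> b + \<delta>"
proof -
  obtain k where "p k \<le> b" "b < p (Suc k)" using time_seq_interval[OF p \<open>0 \<le> b\<close>] .
  then show ?thesis using that[of "Suc k"] gaps[rule_format, of k] by simp
qed

lemma adapted_switchingD:
  "adapted_switching \<sigma> tt \<Longrightarrow> tt k \<le> t \<Longrightarrow> t < tt (Suc k) \<Longrightarrow> \<sigma> t = \<sigma> (tt k)"
  unfolding adapted_switching_def by blast

lemma PC_shift:
  assumes "\<sigma> \<in> PC" and a: "0 \<le> a"
  shows "(\<lambda>t. \<sigma> (t + a)) \<in> PC"
proof -
  obtain tt where ad: "adapted_switching \<sigma> tt" using assms(1) by (auto simp: PC_def)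
  have tt: "time_seq tt" using ad by (simp add: adapted_switching_def)
  define j where "j = time_seq_index tt a"
  have j: "tt j \<le> a" "a < tt (Suc j)" using time_seq_index[OF tt a] by (auto simp: j_def)
  define tt' where "tt' n = (if n = 0 then 0 else tt (j + n) - a)" for n
  have "tt' 0 = 0" by (simp add: tt'_def)
  moreover have "strict_mono tt'"
  proof (rule strict_monoI_Suc)
    fix n show "tt' n < tt' (Suc n)"
      using j time_seq_less[OF tt, of "j + n" "Suc (j + n)"] by (auto simp: tt'_def)
  qed
  moreover have "filterlim tt' at_top sequentially"
    unfolding filterlim_at_top
  proof
    fix Z :: real
    obtain m where m: "Z + a < tt m" using time_seq_unbounded[OF tt] .
    have "Z \<le> tt' n" if "m + 1 \<le> n" for n
      using m that time_seq_mono[OF tt, of m "j + n"] by (auto simp: tt'_def)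
    then show "eventually (\<lambda>n. Z \<le> tt' n) sequentially"
      unfolding eventually_sequentially by blast
  qed
  moreover have "\<sigma> (t + a) = \<sigma> (tt' k + a)" if "tt' k \<le> t" "t < tt' (Suc k)" for k t
  proof (cases "k = 0")
    case True
    then have "\<sigma> (t + a) = \<sigma> (tt j)"
      using that j by (intro adapted_switchingD[OF ad]) (auto simp: tt'_def)
    moreover have "\<sigma> a = \<sigma> (tt j)" using j by (rule adapted_switchingD[OF ad])
    ultimately show ?thesis using True by (simp add: tt'_def)
  next
    case False
    then show ?thesis
      using that adapted_switchingD[OF ad, of "j + k" "t + a"] by (simp add: tt'_def)
  qed
  ultimately have "adapted_switching (\<lambda>t. \<sigma> (t + a)) tt'"
    unfolding adapted_switching_def time_seq_def by blast
  then show ?thesis by (auto simp: PC_def)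
qed



section \<open>Mild solutions\<close>

text \<open>The variation-of-constants formula \<open>y t = T t x0 + \<integral>\<^sub>0\<^sup>t T (t - s) (F s) ds\<close>,
  pulled back by \<open>T (- t)\<close> so that the integrand does not depend on \<open>t\<close>.\<close>
definition mild_solution :: "(real \<Rightarrow> 'x::banach \<Rightarrow> 'x) \<Rightarrow> (real \<Rightarrow> 'x) \<Rightarrow> 'x \<Rightarrow> (real \<Rightarrow> 'x) \<Rightarrow> bool"
  where "mild_solution T F x0 y \<longleftrightarrow>
    (\<forall>t\<ge>0. ((\<lambda>s. T (- s) (F s)) has_integral (T (- t) (y t) - x0)) {0..t})"

lemma mild_solution_restart:
  assumes G: "C0_group T" and y: "mild_solution T F x0 y" and ct: "0 \<le> c" "c \<le> t"
  shows "((\<lambda>s. T (t - s) (F s)) has_integral (y t - T (t - c) (y c))) {c..t}"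
proof -
  let ?H = "\<lambda>s. T (- s) (F s)"
  have to_c: "(?H has_integral (T (- c) (y c) - x0)) {0..c}"
    and to_t: "(?H has_integral (T (- t) (y t) - x0)) {0..t}"
    using y ct unfolding mild_solution_def by auto
  have "?H integrable_on {c..t}"
    using integrable_subinterval_real[OF has_integral_integrable[OF to_t]] ct by auto
  then have c_to_t: "(?H has_integral integral {c..t} ?H) {c..t}" by auto
  have "integral {c..t} ?H = T (- t) (y t) - T (- c) (y c)"
    using has_integral_unique[OF has_integral_combine[OF ct to_c c_to_t] to_t] by (simp add: algebra_simps)
  with has_integral_C0_group[OF G c_to_t, of t]
  show ?thesis
    by (simp add: C0_group_comp[OF G] C0_group_linear_simps[OF G] C0_group_zero[OF G])
qed

lemma mild_solution_shift:
  assumes G: "C0_group T" and y: "mild_solution T F x0 y" and a: "0 \<le> a"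
  shows "mild_solution T (\<lambda>s. F (s + a)) (y a) (\<lambda>s. y (s + a))"
  unfolding mild_solution_def
proof safe
  fix t :: real assume t: "0 \<le> t"
  have "((\<lambda>s. T (t + a - s) (F s)) has_integral (y (t + a) - T t (y a))) {a..t + a}"
    using mild_solution_restart[OF G y a, of "t + a"] t by simp
  then have "((\<lambda>s. T (t - s) (F (s + a))) has_integral (y (t + a) - T t (y a))) {0..t}"
    using has_integral_shift_real_ivl_iff[of "\<lambda>s. T (t + a - s) (F s)" _ a "t + a" a] by simp
  from has_integral_C0_group[OF G this, of "- t"]
  show "((\<lambda>s. T (- s) (F (s + a))) has_integral (T (- t) (y (t + a)) - y a)) {0..t}"
    by (simp add: C0_group_comp[OF G] C0_group_linear_simps[OF G] C0_group_zero[OF G])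
qed

lemma has_integral_norm_le:
  fixes g :: "real \<Rightarrow> 'a::real_normed_vector"
  assumes g: "(g has_integral I) {c..t}" and ct: "c \<le> t"
    and B: "\<And>s. s \<in> {c..t} \<Longrightarrow> norm (g s) \<le> B"
  shows "norm I \<le> B * (t - c)"
proof -
  have "norm (g c) \<le> B" using B ct by simp
  then have "0 \<le> B" using norm_ge_zero[of "g c"] by linarith
  from has_integral_bound_real[OF this finite.emptyI g] B ct show ?thesis by simp
qed

lemma mild_solution_drift:
  assumes G: "C0_group T" and y: "mild_solution T F x0 y" and ct: "0 \<le> c" "c \<le> t"
    and B: "\<And>s. s \<in> {c..t} \<Longrightarrow> norm (T (t - s) (F s)) \<le> B"
  shows "norm (y t - T (t - c) (y c)) \<le> B * (t - c)"
  using has_integral_norm_le[OF mild_solution_restart[OF G y ct] ct(2) B] .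

lemma integrable_on_time_seq_pieces:
  fixes F :: "real \<Rightarrow> 'a::banach"
  assumes p: "time_seq p" and a: "0 \<le> a"
    and pieces: "\<And>k. F integrable_on {max a (p k)..min b (p (Suc k))}"
  shows "F integrable_on {a..b}"
proof (cases "a \<le> b")
  case True
  have upto: "F integrable_on {a..max a (min b (p n))}" for n
  proof (induction n)
    case 0
    have "p 0 = 0" using p by (simp add: time_seq_def)
    then show ?case using a integrable_on_refl[where f=F and a=a] by (simp add: cbox_interval)
  next
    case (Suc n)
    define l where "l = max a (min b (p n))"
    define u where "u = max a (min b (p (Suc n)))"
    have lu: "l \<le> u" unfolding l_def u_def using time_seq_mono[OF p, of n "Suc n"] by auto
    moreover have "F integrable_on {l..u}"
    proof (cases "l < u")
      case True
      then have "l = max a (p n)" "u = min b (p (Suc n))"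
        unfolding l_def u_def by (auto simp: max_def min_def split: if_splits)
      then show ?thesis using pieces by simp
    next
      case False
      then show ?thesis using lu integrable_on_refl[where f=F and a=l] by (simp add: cbox_interval)
    qed
    ultimately show ?case
      using Suc.IH Henstock_Kurzweil_Integration.integrable_combine[where a=a and c=l and b=u and f=F] by (simp add: l_def u_def)
  qed
  obtain n where "b < p n" using time_seq_unbounded[OF p] .
  then show ?thesis using upto[of n] True by simp
qed auto

lemma integrable_on_switched:
  fixes g :: "'q \<Rightarrow> real \<Rightarrow> 'a::banach"
  assumes ad: "adapted_switching \<sigma> tt" and a: "0 \<le> a"
    and g: "\<And>q. continuous_on {a..b} (g q)"
  shows "(\<lambda>s. g (\<sigma> s) s) integrable_on {a..b}"
proof (rule integrable_on_time_seq_pieces[OF _ a])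
  show "time_seq tt" using ad by (simp add: adapted_switching_def)
  fix k
  let ?J = "{max a (tt k)..min b (tt (Suc k))}"
  have "g (\<sigma> (tt k)) integrable_on ?J"
    by (rule integrable_continuous_interval) (auto intro: continuous_on_subset[OF g])
  moreover have "g (\<sigma> s) s = g (\<sigma> (tt k)) s" if "s \<in> ?J - {tt (Suc k)}" for s
    using that adapted_switchingD[OF ad, of k s] by auto
  ultimately show "(\<lambda>s. g (\<sigma> s) s) integrable_on ?J"
    using integrable_spike_finite[of "{tt (Suc k)}" ?J "\<lambda>s. g (\<sigma> s) s" "g (\<sigma> (tt k))"] by simp
qed

lemma has_integral_at_right_end:
  fixes H \<Phi> :: "real \<Rightarrow> 'a::banach"
  assumes ab: "a < b" and H: "H integrable_on {a..b}" and \<Phi>: "continuous_on {a..b} \<Phi>"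
    and before: "\<And>t. t \<in> {a..<b} \<Longrightarrow> (H has_integral (\<Phi> t - \<Phi> a)) {a..t}"
  shows "(H has_integral (\<Phi> b - \<Phi> a)) {a..b}"
proof -
  have "eventually (\<lambda>t. integral {a..t} H = \<Phi> t - \<Phi> a) (at_left b)"
    using eventually_at_left_real[OF ab] by eventually_elim (simp add: integral_unique[OF before])
  with continuous_on_Icc_at_leftD[OF indefinite_integral_continuous_1[OF H] ab]
  have "((\<lambda>t. \<Phi> t - \<Phi> a) \<longlongrightarrow> integral {a..b} H) (at_left b)"
    by (rule Lim_transform_eventually)
  moreover have "((\<lambda>t. \<Phi> t - \<Phi> a) \<longlongrightarrow> \<Phi> b - \<Phi> a) (at_left b)"
    using continuous_on_Icc_at_leftD[OF \<Phi> ab] by (rule tendsto_diff) (rule tendsto_const)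
  ultimately have "integral {a..b} H = \<Phi> b - \<Phi> a"
    by (rule tendsto_unique[OF trivial_limit_at_left_real])
  then show ?thesis using H by (simp add: has_integral_integral)
qed

lemma has_integral_time_seq_glue:
  fixes H \<Phi> :: "real \<Rightarrow> 'a::banach"
  assumes p: "time_seq p"
    and pieces: "\<And>k t. t \<in> {p k..p (Suc k)} \<Longrightarrow> (H has_integral (\<Phi> t - \<Phi> (p k))) {p k..t}"
    and t: "0 \<le> t"
  shows "(H has_integral (\<Phi> t - \<Phi> 0)) {0..t}"
proof -
  have upto: "(H has_integral (\<Phi> t - \<Phi> 0)) {0..t}" if "t \<in> {p k..p (Suc k)}" for k t
    using that
  proof (induction k arbitrary: t)
    case 0
    then show ?case using pieces[OF 0] p by (simp add: time_seq_def)
  next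
    case (Suc k)
    have "p (Suc k) \<in> {p k..p (Suc k)}" using time_seq_mono[OF p, of k "Suc k"] by simp
    from has_integral_combine[OF _ _ Suc.IH[OF this] pieces[OF Suc.prems]]
    show ?case using Suc.prems time_seq_nonneg[OF p, of "Suc k"] by simp
  qed
  show ?thesis
    by (rule upto[of t "time_seq_index p t"]) (use time_seq_index[OF p t] in simp)
qed


section \<open>A Gronwall-type estimate\<close>

lemma sup_bound_step:
  fixes \<phi> :: "real \<Rightarrow> real"
  assumes cont: "continuous_on {a..t} \<phi>" and ct: "a \<le> c" "c \<le> t" "t - c \<le> 1 / (2 * \<beta>)"
    and \<beta>: "0 < \<beta>" and \<kappa>: "0 \<le> \<kappa>" and \<gamma>: "0 \<le> \<gamma>" and nonneg: "\<And>s. s \<in> {a..t} \<Longrightarrow> 0 \<le> \<phi> s"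
    and before: "\<And>s. s \<in> {a..c} \<Longrightarrow> \<phi> s \<le> P"
    and step: "\<And>s B. c \<le> s \<Longrightarrow> s \<le> t \<Longrightarrow> (\<forall>r\<in>{a..s}. \<phi> r \<le> B) \<Longrightarrow>
      \<phi> s \<le> \<kappa> * \<phi> c + (s - c) * (\<beta> * B + \<gamma>)"
  shows "\<phi> t \<le> 2 * (1 + \<kappa>) * P + \<gamma> / \<beta>"
proof -
  obtain s where s: "s \<in> {a..t}" and max: "\<forall>r\<in>{a..t}. \<phi> r \<le> \<phi> s"
    using continuous_attains_sup[OF compact_Icc _ cont] ct by fastforce
  have P: "0 \<le> P" "\<phi> c \<le> P" using before[of c] nonneg[of c] ct by auto
  have "\<phi> s \<le> 2 * (1 + \<kappa>) * P + \<gamma> / \<beta>"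
  proof (cases "s \<le> c")
    case True
    then have "\<phi> s \<le> P" using before s by simp
    moreover have "1 * P \<le> 2 * (1 + \<kappa>) * P" using P \<kappa> by (intro mult_right_mono) auto
    moreover have "0 \<le> \<gamma> / \<beta>" using \<beta> \<gamma> by simp
    ultimately show ?thesis by linarith
  next
    case False
    have "\<phi> s \<le> \<kappa> * \<phi> c + (s - c) * (\<beta> * \<phi> s + \<gamma>)"
      using step[of s "\<phi> s"] False s max by auto
    also have "(s - c) * (\<beta> * \<phi> s + \<gamma>) \<le> 1 / (2 * \<beta>) * (\<beta> * \<phi> s + \<gamma>)"
      using False s ct \<beta> \<gamma> nonneg[OF s] by (intro mult_right_mono) auto
    also have "\<dots> = \<phi> s / 2 + \<gamma> / (2 * \<beta>)" using \<beta> by (simp add: field_simps)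
    finally have "\<phi> s \<le> 2 * \<kappa> * \<phi> c + \<gamma> / \<beta>" using \<beta> by (simp add: field_simps)
    moreover have "2 * \<kappa> * \<phi> c \<le> 2 * \<kappa> * P" using P \<kappa> by (intro mult_left_mono) auto
    ultimately show ?thesis using P by (simp add: algebra_simps)
  qed
  moreover have "\<phi> t \<le> \<phi> s" using max[rule_format, of t] ct by simp
  ultimately show ?thesis by linarith
qed

text \<open>On steps of length \<open>1 / (2 \<beta>)\<close> the supremum of \<open>\<phi>\<close> grows at most by the factor
  \<open>2 (1 + \<kappa>)\<close> plus \<open>\<gamma> / \<beta>\<close>.\<close>
lemma gronwall_sup_bound:
  fixes \<phi> :: "real \<Rightarrow> real"
  assumes cont: "continuous_on {a..b} \<phi>" and nonneg: "\<And>t. t \<in> {a..b} \<Longrightarrow> 0 \<le> \<phi> t"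
    and \<phi>a: "\<phi> a = 0" and \<kappa>: "0 \<le> \<kappa>" and \<beta>: "0 < \<beta>" and \<gamma>: "0 \<le> \<gamma>"
    and step: "\<And>c t B. a \<le> c \<Longrightarrow> c \<le> t \<Longrightarrow> t \<le> b \<Longrightarrow> (\<forall>s\<in>{a..t}. \<phi> s \<le> B) \<Longrightarrow>
      \<phi> t \<le> \<kappa> * \<phi> c + (t - c) * (\<beta> * B + \<gamma>)"
    and t: "t \<in> {a..b}"
  shows "\<phi> t \<le> \<gamma> / \<beta> * (2 * (1 + \<kappa>)) ^ nat \<lceil>2 * \<beta> * (b - a)\<rceil>"
proof -
  define h where "h = 1 / (2 * \<beta>)"
  define q where "q = 2 * (1 + \<kappa>)"
  define A where "A = \<gamma> / \<beta>"
  have h: "0 < h" using \<beta> by (simp add: h_def)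
  have q: "2 \<le> q" using \<kappa> by (simp add: q_def)
  have A: "0 \<le> A" using \<beta> \<gamma> by (simp add: A_def)
  have "\<phi> s \<le> A * (q ^ n - 1)" if "s \<in> {a..min b (a + real n * h)}" for n s
    using that
  proof (induction n arbitrary: s)
    case 0
    then have "s = a" by simp
    then show ?case using \<phi>a by simp
  next
    case (Suc n)
    define c where "c = min b (a + real n * h)"
    have "1 \<le> q ^ n" using q by (simp add: one_le_power)
    then have "q * (A * (q ^ n - 1)) + A \<le> A * (q ^ Suc n - 1)"
      using A q by (simp add: algebra_simps mult_left_mono)
    moreover have "A * (q ^ n - 1) \<le> A * (q ^ Suc n - 1)"
      using A q \<open>1 \<le> q ^ n\<close> by (intro mult_left_mono) auto
    moreover have "\<phi> s \<le> 2 * (1 + \<kappa>) * (A * (q ^ n - 1)) + \<gamma> / \<beta>" if "c < s"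
    proof (rule sup_bound_step[where \<phi> = \<phi> and a = a and c = c and t = s])
      show "continuous_on {a..s} \<phi>"
        using Suc.prems by (auto intro: continuous_on_subset[OF cont])
      have "c = a + real n * h" "s \<le> a + real (Suc n) * h"
        using that Suc.prems by (auto simp: c_def min_def split: if_splits)
      then show "s - c \<le> 1 / (2 * \<beta>)"
        unfolding h_def[symmetric] by (simp add: algebra_simps)
      show "\<And>r. r \<in> {a..c} \<Longrightarrow> \<phi> r \<le> A * (q ^ n - 1)"
        using Suc.IH by (simp add: c_def)
    qed (use Suc.prems that h nonneg step \<beta> \<kappa> \<gamma> in \<open>auto simp: c_def\<close>)
    ultimately show ?case
      using Suc.IH[of s] Suc.prems unfolding q_def A_def by (force simp: c_def)
  qed
  moreover define N where "N = nat \<lceil>2 * \<beta> * (b - a)\<rceil>"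
  moreover have "b \<le> a + real N * h"
  proof -
    have "2 * \<beta> * (b - a) \<le> real N" unfolding N_def by linarith
    then show ?thesis using \<beta> by (simp add: h_def field_simps)
  qed
  ultimately have "\<phi> t \<le> A * (q ^ N - 1)" using t by simp
  also have "\<dots> \<le> A * q ^ N" using A by (simp add: mult_left_mono)
  finally show ?thesis by (simp add: A_def q_def N_def)
qed

lemma mild_solution_initial:
  assumes "C0_group T" and "mild_solution T F x0 y"
  shows "y 0 = x0"
proof -
  have "((\<lambda>s. T (- s) (F s)) has_integral (T 0 (y 0) - x0)) {0..0}"
    using assms(2) unfolding mild_solution_def by (metis minus_zero order_refl)
  then have "T 0 (y 0) - x0 = 0"
    by (rule has_integral_unique[OF _ has_integral_null_real]) simp
  then show ?thesis using C0_group_zero[OF assms(1)] by simp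
qed

lemma mild_solution_gronwall:
  assumes G: "C0_group T" and y: "mild_solution T F x0 y" and z: "mild_solution T G x0 z"
    and cont: "continuous_on {0..W} y" "continuous_on {0..W} z"
    and C: "1 \<le> C" "\<And>t v. \<bar>t\<bar> \<le> W \<Longrightarrow> norm (T t v) \<le> C * norm v"
    and \<beta>: "0 < \<beta>" and \<gamma>: "0 \<le> \<gamma>"
    and FG: "\<And>s B. s \<in> {0..W} \<Longrightarrow> (\<forall>r\<in>{0..s}. norm (y r - z r) \<le> B) \<Longrightarrow>
      norm (F s - G s) \<le> \<beta> * B + \<gamma>"
    and t: "t \<in> {0..W}"
  shows "norm (y t - z t) \<le> \<gamma> / \<beta> * (2 * (1 + C)) ^ nat \<lceil>2 * (C * \<beta>) * W\<rceil>"
proof -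
  have "norm (y t - z t) \<le> (C * \<gamma>) / (C * \<beta>) * (2 * (1 + C)) ^ nat \<lceil>2 * (C * \<beta>) * (W - 0)\<rceil>"
  proof (rule gronwall_sup_bound[where \<phi> = "\<lambda>t. norm (y t - z t)", OF _ _ _ _ _ _ _ t])
    show "continuous_on {0..W} (\<lambda>t. norm (y t - z t))"
      using cont by (intro continuous_intros)
    show "norm (y 0 - z 0) = 0"
      using mild_solution_initial[OF G y] mild_solution_initial[OF G z] by simp
    fix c t B assume ct: "0 \<le> c" "c \<le> t" "t \<le> W" and B: "\<forall>s\<in>{0..t}. norm (y s - z s) \<le> B"
    have diff: "((\<lambda>s. T (t - s) (F s - G s)) has_integral
        (y t - z t) - T (t - c) (y c - z c)) {c..t}"
      using has_integral_diff[OF mild_solution_restart[OF G y ct(1,2)] mild_solution_restart[OF G z ct(1,2)]]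
      by (simp add: C0_group_linear_simps[OF G] algebra_simps)
    have bound: "norm (T (t - s) (F s - G s)) \<le> C * (\<beta> * B + \<gamma>)" if "s \<in> {c..t}" for s
    proof -
      have "norm (T (t - s) (F s - G s)) \<le> C * norm (F s - G s)"
        using that ct by (intro C(2)) auto
      also have "\<dots> \<le> C * (\<beta> * B + \<gamma>)"
        using that ct B C(1) by (intro mult_left_mono FG) auto
      finally show ?thesis .
    qed
    have "norm ((y t - z t) - T (t - c) (y c - z c)) \<le> C * (\<beta> * B + \<gamma>) * (t - c)"
      by (rule has_integral_norm_le[OF diff ct(2) bound])
    moreover have "norm (T (t - c) (y c - z c)) \<le> C * norm (y c - z c)"
      using ct by (intro C(2)) auto
    ultimately show "norm (y t - z t) \<le> C * norm (y c - z c) + (t - c) * (C * \<beta> * B + C * \<gamma>)"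
      using norm_triangle_ineq2[of "y t - z t" "T (t - c) (y c - z c)"] by (simp add: algebra_simps)
  qed (use C \<beta> \<gamma> in auto)
  then show ?thesis using C by simp
qed


section \<open>Existence of switched mild solutions\<close>

lemma exp_has_integral:
  fixes c t :: real
  assumes "0 < c" "0 \<le> t"
  shows "((\<lambda>s. exp (c * s)) has_integral (exp (c * t) - 1) / c) {0..t}"
proof -
  have "((\<lambda>s. exp (c * s)) has_integral (exp (c * t) / c - exp (c * 0) / c)) {0..t}"
  proof (rule fundamental_theorem_of_calculus[OF assms(2)])
    fix x assume "x \<in> {0..t}"
    have "((\<lambda>s. exp (c * s) / c) has_real_derivative (exp (c * x) * c / c)) (at x within {0..t})"
      by (auto intro!: derivative_eq_intros)
    then show "((\<lambda>s. exp (c * s) / c) has_vector_derivative exp (c * x)) (at x within {0..t})"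
      using assms by (simp add: has_real_derivative_iff_has_vector_derivative)
  qed
  then show ?thesis by (simp add: diff_divide_distrib)
qed

lemma C0_group_convolution_bound:
  fixes T :: "real \<Rightarrow> 'x::banach \<Rightarrow> 'x"
  assumes G: "C0_group T" and C: "0 \<le> C" "\<And>t v. norm (T t v) \<le> C * exp (\<omega> * \<bar>t\<bar>) * norm v"
    and \<gamma>: "\<omega> < \<gamma>" and t: "0 \<le> t"
    and int: "(\<lambda>s. T (- s) (\<psi> s)) integrable_on {0..t}"
    and \<psi>: "\<And>s. s \<in> {0..t} \<Longrightarrow> norm (\<psi> s) \<le> A * exp (\<gamma> * s)"
  shows "exp (- \<gamma> * t) * norm (T t (integral {0..t} (\<lambda>s. T (- s) (\<psi> s)))) \<le> C * A / (\<gamma> - \<omega>)"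
proof -
  have "norm (\<psi> 0) \<le> A" using \<psi>[of 0] t by simp
  then have A: "0 \<le> A" using norm_ge_zero[of "\<psi> 0"] by linarith
  have conv: "((\<lambda>s. T (t - s) (\<psi> s)) has_integral T t (integral {0..t} (\<lambda>s. T (- s) (\<psi> s)))) {0..t}"
    using has_integral_C0_group[OF G integrable_integral[OF int], of t] by (simp add: C0_group_comp[OF G])
  have majorant: "((\<lambda>s. C * A * exp (\<omega> * t) * exp ((\<gamma> - \<omega>) * s)) has_integral
      C * A * exp (\<omega> * t) * ((exp ((\<gamma> - \<omega>) * t) - 1) / (\<gamma> - \<omega>))) {0..t}"
    using exp_has_integral[of "\<gamma> - \<omega>" t] \<gamma> t by (intro has_integral_mult_right) auto
  have "norm (T (t - s) (\<psi> s)) \<le> C * A * exp (\<omega> * t) * exp ((\<gamma> - \<omega>) * s)" if s: "s \<in> {0..t}" for s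
  proof -
    have "norm (T (t - s) (\<psi> s)) \<le> C * exp (\<omega> * \<bar>t - s\<bar>) * (A * exp (\<gamma> * s))"
      using C(2)[of "t - s"] \<psi>[OF s] C(1) by (meson mult_left_mono order_trans mult_nonneg_nonneg exp_ge_zero)
    also have "\<dots> = C * A * exp (\<omega> * t) * exp ((\<gamma> - \<omega>) * s)"
      using s by (simp add: exp_add[symmetric] algebra_simps)
    finally show ?thesis .
  qed
  then have "norm (T t (integral {0..t} (\<lambda>s. T (- s) (\<psi> s)))) \<le>
      C * A * exp (\<omega> * t) * ((exp ((\<gamma> - \<omega>) * t) - 1) / (\<gamma> - \<omega>))"
    using integral_norm_bound_integral[OF has_integral_integrable[OF conv] has_integral_integrable[OF majorant]]
      integral_unique[OF conv] integral_unique[OF majorant] by simp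
  also have "\<dots> \<le> C * A * exp (\<omega> * t) * (exp ((\<gamma> - \<omega>) * t) / (\<gamma> - \<omega>))"
    using \<gamma> A C(1) by (intro mult_left_mono divide_right_mono) auto
  also have "\<dots> = exp (\<gamma> * t) * (C * A / (\<gamma> - \<omega>))"
    by (simp add: exp_add[symmetric] algebra_simps)
  finally show ?thesis by (simp add: exp_minus field_simps)
qed

lemma C0_group_convolution_lipschitz:
  fixes T :: "real \<Rightarrow> 'x::banach \<Rightarrow> 'x" and g :: "real \<Rightarrow> 'x \<Rightarrow> 'x"
  assumes G: "C0_group T" and C: "0 \<le> C" "\<And>t v. norm (T t v) \<le> C * exp (\<omega> * \<bar>t\<bar>) * norm v"
    and \<gamma>: "\<omega> < \<gamma>" and t: "0 \<le> t"
    and g: "\<And>s x x'. norm (g s x - g s x') \<le> L * norm (x - x')" and L: "0 \<le> L"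
    and int: "(\<lambda>s. T (- s) (g s (z s))) integrable_on {0..t}" "(\<lambda>s. T (- s) (g s (z' s))) integrable_on {0..t}"
    and B: "\<And>s. s \<in> {0..t} \<Longrightarrow> norm (z s - z' s) \<le> B * exp (\<gamma> * s)"
  shows "exp (- \<gamma> * t) * norm (T t (integral {0..t} (\<lambda>s. T (- s) (g s (z s))) -
    integral {0..t} (\<lambda>s. T (- s) (g s (z' s))))) \<le> C * (L * B) / (\<gamma> - \<omega>)"
proof -
  have diff: "integral {0..t} (\<lambda>s. T (- s) (g s (z s))) - integral {0..t} (\<lambda>s. T (- s) (g s (z' s))) =
      integral {0..t} (\<lambda>s. T (- s) (g s (z s) - g s (z' s)))"
    using integral_diff[OF int] by (simp add: C0_group_linear_simps[OF G])
  have "(\<lambda>s. T (- s) (g s (z s) - g s (z' s))) integrable_on {0..t}"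
    using integrable_diff[OF int] by (simp add: C0_group_linear_simps[OF G])
  moreover have "norm (g s (z s) - g s (z' s)) \<le> L * B * exp (\<gamma> * s)" if "s \<in> {0..t}" for s
    using g[of s "z s" "z' s"] mult_left_mono[OF B[OF that] L] by (simp add: ac_simps)
  ultimately show ?thesis
    unfolding diff by (rule C0_group_convolution_bound[OF G C \<gamma> t])
qed

lemma continuous_on_max_0:
  fixes P :: "real \<Rightarrow> 'a::topological_space"
  assumes "\<And>b. 0 \<le> b \<Longrightarrow> continuous_on {0..b} P"
  shows "continuous_on UNIV (\<lambda>t. P (max 0 t))"
proof (rule continuous_at_imp_continuous_on, intro ballI)
  fix x :: real
  define b where "b = \<bar>x\<bar> + 1"
  have "continuous_on {-b..b} (\<lambda>t. P (max 0 t))"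
    by (rule continuous_on_compose2[OF assms[of b]]) (auto simp: b_def intro: continuous_intros)
  moreover have "x \<in> interior {-b..b}" by (auto simp: b_def)
  ultimately show "isCont (\<lambda>t. P (max 0 t)) x" by (rule continuous_on_interior)
qed

text \<open>Picard iteration in the space of bounded continuous functions with the weight
  \<open>exp (- \<gamma> t)\<close>; for large \<open>\<gamma>\<close> the Picard map is a contraction with constant \<open>1/2\<close>.\<close>
lemma switched_mild_solution_exists:
  fixes T :: "real \<Rightarrow> 'x::banach \<Rightarrow> 'x" and g :: "'q \<Rightarrow> 'x \<Rightarrow> 'x"
  assumes G: "C0_group T" and ad: "adapted_switching \<sigma> tt"
    and lip: "\<And>q. lipschitz_on L UNIV (g q)" and zero: "\<And>q. g q 0 = 0"
  obtains z where "continuous_on UNIV z" "mild_solution T (\<lambda>s. g (\<sigma> s) (z s)) x0 z"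
proof -
  obtain C \<omega> where C: "1 \<le> C" "0 \<le> \<omega>" "\<And>t v. norm (T t v) \<le> C * exp (\<omega> * \<bar>t\<bar>) * norm v"
    using C0_group_exp_bound[OF G] by blast
  have L: "0 \<le> L" using lipschitz_on_nonneg[OF lip] .
  have g_lip: "norm (g (\<sigma> s) x - g (\<sigma> s) x') \<le> L * norm (x - x')" for s x x'
    using lipschitz_onD[OF lip] by (simp add: dist_norm)
  define \<gamma> where "\<gamma> = \<omega> + 2 * C * L + 1"
  have "0 \<le> C * L" using C L by simp
  then have \<gamma>: "\<omega> < \<gamma>" "C * L / (\<gamma> - \<omega>) \<le> 1 / 2"
    by (simp_all add: \<gamma>_def field_simps)
  define Z :: "(real \<Rightarrow>\<^sub>C 'x) \<Rightarrow> real \<Rightarrow> 'x" where "Z u s = exp (\<gamma> * s) *\<^sub>R apply_bcontfun u s" for u s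
  define H where "H u = (\<lambda>s. T (- s) (g (\<sigma> s) (Z u s)))" for u
  define P where "P u t = exp (- \<gamma> * t) *\<^sub>R T t (x0 + integral {0..t} (H u))" for u t
  have H_int: "H u integrable_on {0..b}" for u b
  proof -
    have "continuous_on {0..b} (\<lambda>s. T (- s) (g q (Z u s)))" for q
      unfolding Z_def
      by (intro continuous_on_C0_group[OF G] continuous_on_compose2[OF lipschitz_on_continuous_on[OF lip]]
          continuous_intros) auto
    then show ?thesis
      unfolding H_def by (rule integrable_on_switched[OF ad order_refl])
  qed
  have P_cont: "continuous_on {0..b} (P u)" if "0 \<le> b" for u b
    unfolding P_def
    by (intro continuous_intros continuous_on_C0_group[OF G] indefinite_integral_continuous_1 H_int)
  have P_bound: "norm (P u t - P v t) \<le> C * (L * B) / (\<gamma> - \<omega>)"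
    if t: "0 \<le> t" and B: "\<And>s. dist (apply_bcontfun u s) (apply_bcontfun v s) \<le> B" for u v t B
  proof -
    have "P u t - P v t = exp (- \<gamma> * t) *\<^sub>R
        T t ((x0 + integral {0..t} (H u)) - (x0 + integral {0..t} (H v)))"
      by (simp only: P_def scaleR_diff_right C0_group_linear_simps(2)[OF G])
    moreover have "exp (- \<gamma> * t) * norm (T t (integral {0..t} (H u) - integral {0..t} (H v)))
        \<le> C * (L * B) / (\<gamma> - \<omega>)"
      unfolding H_def
    proof (rule C0_group_convolution_lipschitz[OF G _ C(3) \<gamma>(1) t g_lip L])
      show "norm (Z u s - Z v s) \<le> B * exp (\<gamma> * s)" for s
        using B[of s] by (simp add: Z_def dist_norm scaleR_diff_right[symmetric] mult.commute mult_left_mono)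
    qed (use C H_int in \<open>auto simp: H_def\<close>)
    ultimately show ?thesis by simp
  qed
  have P_0: "P 0 t = exp (- \<gamma> * t) *\<^sub>R T t x0" for t
    by (simp add: P_def H_def Z_def zero C0_group_linear_simps[OF G])
  have P_in: "(\<lambda>t. P u (max 0 t)) \<in> bcontfun" for u
  proof -
    obtain B where B: "\<And>s. dist (apply_bcontfun u s) (apply_bcontfun 0 s) \<le> B"
      using bounded_apply_bcontfun[of u] unfolding bounded_iff by (auto simp: dist_norm)
    have "norm (P u t) \<le> C * norm x0 + C * (L * B) / (\<gamma> - \<omega>)" if "0 \<le> t" for t
    proof -
      have "norm (P 0 t) \<le> exp (- \<gamma> * t) * (C * exp (\<omega> * t) * norm x0)"
        using C(3)[of t x0] that by (simp add: P_0 mult_left_mono)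
      also have "\<dots> = C * norm x0 * exp ((\<omega> - \<gamma>) * t)"
        using that by (simp add: exp_add[symmetric] algebra_simps)
      also have "\<dots> \<le> C * norm x0"
        using that \<gamma> C by (intro mult_left_le) (auto simp: mult_nonpos_nonneg)
      finally show ?thesis
        using P_bound[OF that B] norm_triangle_sub[of "P u t" "P 0 t"] by linarith
    qed
    then have "bounded (range (\<lambda>t. P u (max 0 t)))"
      unfolding bounded_iff by (intro exI[of _ "C * norm x0 + C * (L * B) / (\<gamma> - \<omega>)"]) auto
    then show ?thesis
      using continuous_on_max_0[OF P_cont] by (simp add: bcontfun_def)
  qed
  define \<Phi> where "\<Phi> u = Bcontfun (\<lambda>t. P u (max 0 t))" for u
  have \<Phi>: "apply_bcontfun (\<Phi> u) t = P u (max 0 t)" for u t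
    unfolding \<Phi>_def using Bcontfun_inverse[OF P_in] by simp
  have "dist (\<Phi> u) (\<Phi> v) \<le> 1 / 2 * dist u v" for u v
  proof (rule dist_bound)
    fix t
    have "dist (apply_bcontfun (\<Phi> u) t) (apply_bcontfun (\<Phi> v) t) = norm (P u (max 0 t) - P v (max 0 t))"
      by (simp add: \<Phi> dist_norm)
    also have "\<dots> \<le> C * (L * dist u v) / (\<gamma> - \<omega>)"
      by (rule P_bound) (auto intro: dist_bounded)
    also have "\<dots> = C * L / (\<gamma> - \<omega>) * dist u v" by simp
    also have "\<dots> \<le> 1 / 2 * dist u v" using \<gamma>(2) by (intro mult_right_mono) auto
    finally show "dist (apply_bcontfun (\<Phi> u) t) (apply_bcontfun (\<Phi> v) t) \<le> 1 / 2 * dist u v" .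
  qed
  then obtain u where u: "\<Phi> u = u" using banach_fix_type[of "1/2" \<Phi>] by auto
  have z: "Z u t = T t (x0 + integral {0..t} (H u))" if "0 \<le> t" for t
    using \<Phi>[of u t] that by (simp add: u Z_def P_def exp_minus)
  show ?thesis
  proof
    show "continuous_on UNIV (Z u)" unfolding Z_def by (intro continuous_intros) auto
    show "mild_solution T (\<lambda>s. g (\<sigma> s) (Z u s)) x0 (Z u)"
      unfolding mild_solution_def
    proof safe
      fix t :: real assume "0 \<le> t"
      then have "T (- t) (Z u t) - x0 = integral {0..t} (H u)"
        by (simp add: z C0_group_comp[OF G] C0_group_zero[OF G])
      then show "((\<lambda>s. T (- s) (g (\<sigma> s) (Z u s))) has_integral (T (- t) (Z u t) - x0)) {0..t}"
        using H_int[of u t] by (simp add: H_def has_integral_integral)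
    qed
  qed
qed


section \<open>The closed-loop and the sampled-data system\<close>

locale closed_loop_system =
  fixes T :: "real \<Rightarrow> 'x::banach \<Rightarrow> 'x" and f :: "'q \<Rightarrow> 'x \<Rightarrow> 'u::banach \<Rightarrow> 'x"
    and K :: "'x \<Rightarrow> 'u" and Lf LK :: real
  assumes group: "C0_group T"
    and Lf_pos: "0 < Lf"
    and f_lip: "\<And>q. lipschitz_on Lf UNIV (\<lambda>(x, u). f q x u)"
    and f_zero: "\<And>q. f q 0 0 = 0"
    and K_lip: "lipschitz_on LK UNIV K"
    and K_zero: "K 0 = 0"
begin

lemma LK_nonneg: "0 \<le> LK"
  using lipschitz_on_nonneg[OF K_lip] .

lemma f_lipschitz_bound: "norm (f q x u - f q x' u') \<le> Lf * (norm (x - x') + norm (u - u'))"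
proof -
  have "norm (f q x u - f q x' u') \<le> Lf * dist (x, u) (x', u')"
    using lipschitz_onD[OF f_lip, of "(x, u)" "(x', u')"] by (simp add: dist_norm)
  also have "\<dots> \<le> Lf * (norm (x - x') + norm (u - u'))"
    using norm_Pair_le[of "x - x'" "u - u'"] Lf_pos by (intro mult_left_mono) (auto simp: dist_norm)
  finally show ?thesis .
qed

lemma K_lipschitz_bound: "norm (K x - K x') \<le> LK * norm (x - x')"
  using lipschitz_onD[OF K_lip] by (simp add: dist_norm)

lemma continuous_on_f:
  "continuous_on S a \<Longrightarrow> continuous_on S b \<Longrightarrow> continuous_on S (\<lambda>s. f q (a s) (b s))"
  using continuous_on_compose2[OF lipschitz_on_continuous_on[OF f_lip] continuous_on_Pair] by auto

lemma continuous_on_K: "continuous_on S a \<Longrightarrow> continuous_on S (\<lambda>s. K (a s))"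
  using continuous_on_compose2[OF lipschitz_on_continuous_on[OF K_lip]] by auto

lemma feedback_lipschitz: "lipschitz_on (Lf * (1 + LK)) UNIV (\<lambda>x. f q x (K x))"
proof (rule lipschitz_onI)
  fix x x' :: 'x
  have "norm (f q x (K x) - f q x' (K x')) \<le> Lf * (norm (x - x') + LK * norm (x - x'))"
    using f_lipschitz_bound K_lipschitz_bound Lf_pos
    by (meson add_left_mono mult_left_mono order_trans less_imp_le)
  then show "dist (f q x (K x)) (f q x' (K x')) \<le> Lf * (1 + LK) * dist x x'"
    by (simp add: dist_norm algebra_simps)
qed (use Lf_pos LK_nonneg in simp)

lemma mild_solution_imp_closed_loop_traj:
  assumes ad: "adapted_switching \<sigma> tt" and cont: "continuous_on {0..} z"
    and z: "mild_solution T (\<lambda>s. f (\<sigma> s) (z s) (K (z s))) x0 z"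
  shows "closed_loop_traj T f K \<sigma> x0 z"
  unfolding closed_loop_traj_def
proof (intro conjI exI[of _ tt] allI impI cont ad)
  show "z 0 = x0" by (rule mild_solution_initial[OF group z])
  fix k t assume t: "tt k \<le> t \<and> t < tt (Suc k)"
  have "0 \<le> tt k" using ad by (simp add: adapted_switching_def time_seq_nonneg)
  then have "((\<lambda>s. T (t - s) (f (\<sigma> s) (z s) (K (z s)))) has_integral (z t - T (t - tt k) (z (tt k)))) {tt k..t}"
    using t by (intro mild_solution_restart[OF group z]) auto
  then have shifted: "((\<lambda>s. T (t - (s + tt k)) (f (\<sigma> (s + tt k)) (z (s + tt k)) (K (z (s + tt k)))))
      has_integral (z t - T (t - tt k) (z (tt k)))) {0..t - tt k}"
    using has_integral_shift_real_ivl_iff[of "\<lambda>s. T (t - s) (f (\<sigma> s) (z s) (K (z s)))" _ "tt k" t "tt k"]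
    by simp
  have mode: "\<sigma> (s + tt k) = \<sigma> (tt k)" if "s \<in> {0..t - tt k}" for s
    using that t by (intro adapted_switchingD[OF ad]) auto
  show "((\<lambda>s. T (t - tt k - s) (f (\<sigma> (tt k)) (z (s + tt k)) (K (z (s + tt k)))))
      has_integral (z t - T (t - tt k) (z (tt k)))) {0..t - tt k}"
    by (rule has_integral_eq[OF _ shifted]) (simp add: mode algebra_simps)
qed

lemma closed_loop_traj_exists:
  assumes "\<sigma> \<in> PC"
  obtains z where "closed_loop_traj T f K \<sigma> x0 z" "continuous_on UNIV z"
    "mild_solution T (\<lambda>s. f (\<sigma> s) (z s) (K (z s))) x0 z"
proof -
  obtain tt where ad: "adapted_switching \<sigma> tt" using assms by (auto simp: PC_def)
  obtain z where "continuous_on UNIV z" "mild_solution T (\<lambda>s. f (\<sigma> s) (z s) (K (z s))) x0 z"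
    by (rule switched_mild_solution_exists[OF group ad feedback_lipschitz]) (simp_all add: f_zero K_zero)
  then show ?thesis
    using that mild_solution_imp_closed_loop_traj[OF ad] continuous_on_subset by blast
qed

definition sampled_field :: "(nat \<Rightarrow> real) \<Rightarrow> (real \<Rightarrow> 'q) \<Rightarrow> (real \<Rightarrow> 'x) \<Rightarrow> real \<Rightarrow> 'x" where
  "sampled_field sk \<sigma> y s =
    f (\<sigma> s) (y s) (K (T (s - sk (time_seq_index sk s)) (y (sk (time_seq_index sk s)))))"

lemma sampled_field_integrable:
  assumes sk: "time_seq sk" and \<sigma>: "\<sigma> \<in> PC" and y: "continuous_on {0..} y"
  shows "(\<lambda>s. T (- s) (sampled_field sk \<sigma> y s)) integrable_on {sk k..sk (Suc k)}"
proof -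
  obtain tt where ad: "adapted_switching \<sigma> tt" using \<sigma> by (auto simp: PC_def)
  define G where "G q s = T (- s) (f q (y s) (K (T (s - sk k) (y (sk k)))))" for q s
  have "continuous_on {sk k..sk (Suc k)} y"
    using time_seq_nonneg[OF sk, of k] by (intro continuous_on_subset[OF y]) auto
  then have "continuous_on {sk k..sk (Suc k)} (G q)" for q
    unfolding G_def
    by (intro continuous_on_C0_group[OF group] continuous_on_f continuous_on_K continuous_intros)
  then have "(\<lambda>s. G (\<sigma> s) s) integrable_on {sk k..sk (Suc k)}"
    by (rule integrable_on_switched[OF ad time_seq_nonneg[OF sk]])
  moreover have "G (\<sigma> s) s = T (- s) (sampled_field sk \<sigma> y s)"
    if "s \<in> {sk k..sk (Suc k)} - {sk (Suc k)}" for s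
    using that time_seq_index_eq[OF sk, of k s] by (simp add: sampled_field_def G_def)
  ultimately show ?thesis
    by (intro integrable_spike_finite[of "{sk (Suc k)}", OF _ _ \<open>(\<lambda>s. G (\<sigma> s) s) integrable_on _\<close>]) auto
qed

lemma sampled_traj_segment:
  assumes sk: "time_seq sk" and y: "sampled_traj T f K sk \<sigma> x0 y"
    and t: "sk k \<le> t" "t < sk (Suc k)"
  shows "((\<lambda>s. T (- s) (sampled_field sk \<sigma> y s)) has_integral
    (T (- t) (y t) - T (- sk k) (y (sk k)))) {sk k..t}"
proof -
  define F where "F s = T (- s) (f (\<sigma> s) (y s) (K (T (s - sk k) (y (sk k)))))" for s
  have "((\<lambda>s. T (t - sk k - s) (f (\<sigma> (s + sk k)) (y (s + sk k)) (K (T s (y (sk k))))))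
      has_integral (y t - T (t - sk k) (y (sk k)))) {0..t - sk k}"
    using y t unfolding sampled_traj_def by blast
  from has_integral_C0_group[OF group this, of "- t"]
  have "((\<lambda>s. F (s + sk k)) has_integral (T (- t) (y t) - T (- sk k) (y (sk k)))) {0..t - sk k}"
    by (simp add: F_def C0_group_comp[OF group] C0_group_linear_simps[OF group] algebra_simps)
  then have "(F has_integral (T (- t) (y t) - T (- sk k) (y (sk k)))) {sk k..t}"
    using has_integral_shift_real_ivl_iff[of F _ "sk k" t "sk k"] by simp
  moreover have "F s = T (- s) (sampled_field sk \<sigma> y s)" if "s \<in> {sk k..t}" for s
    using that t time_seq_index_eq[OF sk, of k s] by (simp add: sampled_field_def F_def)
  ultimately show ?thesis by (rule has_integral_eq[rotated])
qed

lemma sampled_traj_mild_solution: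
  assumes sk: "time_seq sk" and \<sigma>: "\<sigma> \<in> PC" and y: "sampled_traj T f K sk \<sigma> x0 y"
  shows "mild_solution T (sampled_field sk \<sigma> y) x0 y"
  unfolding mild_solution_def
proof safe
  fix t :: real assume t: "0 \<le> t"
  have cont: "continuous_on {0..} y" and y0: "y 0 = x0"
    using y by (simp_all add: sampled_traj_def)
  let ?\<Phi> = "\<lambda>t. T (- t) (y t)"
  have "((\<lambda>s. T (- s) (sampled_field sk \<sigma> y s)) has_integral (?\<Phi> t - ?\<Phi> 0)) {0..t}"
  proof (rule has_integral_time_seq_glue[OF sk _ t])
    fix k t assume t: "t \<in> {sk k..sk (Suc k)}"
    show "((\<lambda>s. T (- s) (sampled_field sk \<sigma> y s)) has_integral (?\<Phi> t - ?\<Phi> (sk k))) {sk k..t}"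
    proof (cases "t < sk (Suc k)")
      case True
      then show ?thesis using t sampled_traj_segment[OF sk y] by simp
    next
      case False
      then have "t = sk (Suc k)" using t by simp
      have "continuous_on {sk k..sk (Suc k)} ?\<Phi>"
        using time_seq_nonneg[OF sk, of k]
        by (intro continuous_on_C0_group[OF group] continuous_intros continuous_on_subset[OF cont]) auto
      with time_seq_less[OF sk] sampled_field_integrable[OF sk \<sigma> cont]
      have "((\<lambda>s. T (- s) (sampled_field sk \<sigma> y s)) has_integral (?\<Phi> (sk (Suc k)) - ?\<Phi> (sk k)))
          {sk k..sk (Suc k)}"
        by (rule has_integral_at_right_end) (use sampled_traj_segment[OF sk y] in auto)
      with \<open>t = sk (Suc k)\<close> show ?thesis by simp
    qed
  qed
  then show "((\<lambda>s. T (- s) (sampled_field sk \<sigma> y s)) has_integral (T (- t) (y t) - x0)) {0..t}"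
    by (simp add: y0 C0_group_zero[OF group])
qed

lemma feedback_bound: "norm (f q x (K x)) \<le> Lf * (1 + LK) * norm x"
  using lipschitz_onD[OF feedback_lipschitz, of x 0 q] f_zero K_zero by (simp add: dist_norm)

lemma sampled_field_deviation:
  assumes sk: "time_seq sk" and gaps: "\<forall>k. sk (Suc k) - sk k \<le> \<delta>" and \<delta>: "\<delta> \<le> W"
    and CW: "0 \<le> CW" "\<And>t v. \<bar>t\<bar> \<le> W \<Longrightarrow> norm (T t v) \<le> CW * norm v"
    and z: "mild_solution T (\<lambda>s. f (\<sigma> (s + sk m)) (z s) (K (z s))) x z"
    and z_bound: "\<And>s. 0 \<le> s \<Longrightarrow> norm (z s) \<le> Mz"
    and s: "0 \<le> s" and B: "\<forall>r\<in>{0..s}. norm (y (r + sk m) - z r) \<le> B"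
  shows "norm (sampled_field sk \<sigma> y (s + sk m) - f (\<sigma> (s + sk m)) (z s) (K (z s)))
    \<le> Lf * (1 + LK * CW) * B + Lf * LK * (CW * (Lf * (1 + LK) * Mz)) * \<delta>"
proof -
  define a where "a = sk m"
  define r where "r = sk (time_seq_index sk (s + a)) - a"
  have Mz: "0 \<le> Mz" using z_bound[OF s] norm_ge_zero[of "z s"] by linarith
  have r: "0 \<le> r" "r \<le> s" "s - r \<le> \<delta>"
    using last_sample_before[OF sk gaps, of m "s + a"] s by (auto simp: r_def a_def)
  have "norm (z s - T (s - r) (z r)) \<le> CW * (Lf * (1 + LK) * Mz) * (s - r)"
  proof (rule mild_solution_drift[OF group z r(1,2)])
    fix u assume u: "u \<in> {r..s}"
    have "norm (T (s - u) (f (\<sigma> (u + sk m)) (z u) (K (z u)))) \<le> CW * norm (f (\<sigma> (u + sk m)) (z u) (K (z u)))"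
      using u r \<delta> by (intro CW(2)) auto
    also have "\<dots> \<le> CW * (Lf * (1 + LK) * norm (z u))"
      using feedback_bound CW(1) by (rule mult_left_mono)
    also have "\<dots> \<le> CW * (Lf * (1 + LK) * Mz)"
      using z_bound[of u] u r CW(1) Lf_pos LK_nonneg by (intro mult_left_mono) auto
    finally show "norm (T (s - u) (f (\<sigma> (u + sk m)) (z u) (K (z u)))) \<le> CW * (Lf * (1 + LK) * Mz)" .
  qed
  also have "\<dots> \<le> CW * (Lf * (1 + LK) * Mz) * \<delta>"
    using r CW(1) Lf_pos LK_nonneg Mz by (intro mult_left_mono) auto
  finally have drift: "norm (T (s - r) (z r) - z s) \<le> CW * (Lf * (1 + LK) * Mz) * \<delta>"
    by (simp add: norm_minus_commute)
  have "norm (T (s - r) (y (r + a) - z r)) \<le> CW * norm (y (r + a) - z r)"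
    using r \<delta> by (intro CW(2)) auto
  also have "\<dots> \<le> CW * B"
    using B r CW(1) by (intro mult_left_mono) (auto simp: a_def)
  finally have "norm (T (s - r) (y (r + a)) - z s) \<le> CW * B + CW * (Lf * (1 + LK) * Mz) * \<delta>"
    using drift norm_triangle_ineq[of "T (s - r) (y (r + a) - z r)" "T (s - r) (z r) - z s"]
    by (simp add: C0_group_linear_simps[OF group])
  moreover have "norm (y (s + a) - z s) \<le> B" using B s by (simp add: a_def)
  moreover have "sampled_field sk \<sigma> y (s + a) = f (\<sigma> (s + a)) (y (s + a)) (K (T (s - r) (y (r + a))))"
    by (simp add: sampled_field_def r_def algebra_simps)
  ultimately have "norm (sampled_field sk \<sigma> y (s + a) - f (\<sigma> (s + a)) (z s) (K (z s)))
      \<le> Lf * (B + LK * (CW * B + CW * (Lf * (1 + LK) * Mz) * \<delta>))"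
    using f_lipschitz_bound[of "\<sigma> (s + a)" "y (s + a)" "K (T (s - r) (y (r + a)))" "z s" "K (z s)"]
      K_lipschitz_bound[of "T (s - r) (y (r + a))" "z s"] Lf_pos LK_nonneg
    by (smt (verit, best) mult_left_mono)
  then show ?thesis by (simp add: a_def algebra_simps)
qed

lemma sampled_closed_loop_gap:
  assumes W: "0 \<le> W"
  obtains Q where "0 \<le> Q"
    "\<And>sk \<delta> \<sigma> x y m z Mz t. time_seq sk \<Longrightarrow> \<forall>k. sk (Suc k) - sk k \<le> \<delta> \<Longrightarrow> \<delta> \<le> W \<Longrightarrow>
      \<sigma> \<in> PC \<Longrightarrow> sampled_traj T f K sk \<sigma> x y \<Longrightarrow> continuous_on UNIV z \<Longrightarrow>
      mild_solution T (\<lambda>s. f (\<sigma> (s + sk m)) (z s) (K (z s))) (y (sk m)) z \<Longrightarrow>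
      (\<And>s. 0 \<le> s \<Longrightarrow> norm (z s) \<le> Mz) \<Longrightarrow> t \<in> {0..W} \<Longrightarrow>
      norm (y (t + sk m) - z t) \<le> \<delta> * Q * Mz"
proof -
  obtain C \<omega> where C: "1 \<le> C" "0 \<le> \<omega>" "\<And>t v. norm (T t v) \<le> C * exp (\<omega> * \<bar>t\<bar>) * norm v"
    using C0_group_exp_bound[OF group] by blast
  define CW where "CW = C * exp (\<omega> * W)"
  have "1 \<le> exp (\<omega> * W)" using C(2) W by simp
  then have CW: "1 \<le> CW" using C(1) mult_mono[of 1 C 1 "exp (\<omega> * W)"] by (simp add: CW_def)
  have CW_bound: "norm (T t v) \<le> CW * norm v" if "\<bar>t\<bar> \<le> W" for t v
  proof -
    have "norm (T t v) \<le> C * exp (\<omega> * \<bar>t\<bar>) * norm v" by (rule C(3))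
    also have "\<dots> \<le> CW * norm v"
      unfolding CW_def using that C by (intro mult_right_mono mult_left_mono) (auto intro: mult_left_mono)
    finally show ?thesis .
  qed
  define \<beta> where "\<beta> = Lf * (1 + LK * CW)"
  have \<beta>: "0 < \<beta>" using Lf_pos LK_nonneg CW by (simp add: \<beta>_def add_pos_nonneg)
  define Q where "Q = Lf * LK * (CW * (Lf * (1 + LK))) / \<beta> * (2 * (1 + CW)) ^ nat \<lceil>2 * (CW * \<beta>) * W\<rceil>"
  have "0 \<le> Q" using Lf_pos LK_nonneg CW \<beta> by (simp add: Q_def)
  then show ?thesis
  proof (rule that)
    fix sk \<delta> \<sigma> x y m z Mz t
    assume sk: "time_seq sk" and gaps: "\<forall>k. sk (Suc k) - sk k \<le> \<delta>" and \<delta>: "\<delta> \<le> W"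
      and \<sigma>: "\<sigma> \<in> PC" and y: "sampled_traj T f K sk \<sigma> x y" and z_cont: "continuous_on UNIV z"
      and z: "mild_solution T (\<lambda>s. f (\<sigma> (s + sk m)) (z s) (K (z s))) (y (sk m)) z"
      and z_bound: "\<And>s. 0 \<le> s \<Longrightarrow> norm (z s) \<le> Mz" and t: "t \<in> {0..W}"
    have a: "0 \<le> sk m" by (rule time_seq_nonneg[OF sk])
    have \<delta>0: "0 \<le> \<delta>" using gaps[rule_format, of 0] time_seq_less[OF sk, of 0 "Suc 0"] by simp
    have Mz: "0 \<le> Mz" using z_bound[of 0] norm_ge_zero[of "z 0"] by linarith
    have "continuous_on {0..} y" using y by (simp add: sampled_traj_def)
    then have y_cont: "continuous_on {0..W} (\<lambda>s. y (s + sk m))"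
      by (rule continuous_on_compose2) (use a in \<open>auto intro!: continuous_intros\<close>)
    have "norm (y (t + sk m) - z t) \<le> Lf * LK * (CW * (Lf * (1 + LK) * Mz)) * \<delta> / \<beta> *
        (2 * (1 + CW)) ^ nat \<lceil>2 * (CW * \<beta>) * W\<rceil>"
    proof (rule mild_solution_gronwall[OF group mild_solution_shift[OF group sampled_traj_mild_solution[OF sk \<sigma> y] a]
          z y_cont continuous_on_subset[OF z_cont] CW CW_bound \<beta> _ _ t])
      fix s B assume "s \<in> {0..W}" "\<forall>r\<in>{0..s}. norm (y (r + sk m) - z r) \<le> B"
      then show "norm (sampled_field sk \<sigma> y (s + sk m) - f (\<sigma> (s + sk m)) (z s) (K (z s)))
          \<le> \<beta> * B + Lf * LK * (CW * (Lf * (1 + LK) * Mz)) * \<delta>"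
        using sampled_field_deviation[OF sk gaps \<delta> _ CW_bound z z_bound] CW by (simp add: \<beta>_def)
    qed (use Lf_pos LK_nonneg CW Mz \<delta>0 in auto)
    then show "norm (y (t + sk m) - z t) \<le> \<delta> * Q * Mz"
      by (simp add: Q_def field_simps)
  qed
qed

lemma sampled_traj_window_decay:
  assumes W: "0 \<le> W" and M0: "0 \<le> M0" and l0: "0 \<le> l0"
    and stable: "\<And>\<sigma> x z t. \<sigma> \<in> PC \<Longrightarrow> norm x \<le> r \<Longrightarrow> closed_loop_traj T f K \<sigma> x z \<Longrightarrow> 0 \<le> t \<Longrightarrow>
      norm (z t) \<le> M0 * exp (- l0 * t) * norm x"
  obtains Q where "0 \<le> Q"
    "\<And>sk \<delta> \<sigma> x y m t. time_seq sk \<Longrightarrow> \<forall>k. sk (Suc k) - sk k \<le> \<delta> \<Longrightarrow> \<delta> \<le> W \<Longrightarrow>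
      \<sigma> \<in> PC \<Longrightarrow> sampled_traj T f K sk \<sigma> x y \<Longrightarrow> norm (y (sk m)) \<le> r \<Longrightarrow> t \<in> {sk m..sk m + W} \<Longrightarrow>
      norm (y t) \<le> (M0 * exp (- l0 * (t - sk m)) + \<delta> * Q) * norm (y (sk m))"
proof -
  obtain Q where Q: "0 \<le> Q" and gap:
    "\<And>sk \<delta> \<sigma> x y m z Mz t. time_seq sk \<Longrightarrow> \<forall>k. sk (Suc k) - sk k \<le> \<delta> \<Longrightarrow> \<delta> \<le> W \<Longrightarrow>
      \<sigma> \<in> PC \<Longrightarrow> sampled_traj T f K sk \<sigma> x y \<Longrightarrow> continuous_on UNIV z \<Longrightarrow>
      mild_solution T (\<lambda>s. f (\<sigma> (s + sk m)) (z s) (K (z s))) (y (sk m)) z \<Longrightarrow>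
      (\<And>s. 0 \<le> s \<Longrightarrow> norm (z s) \<le> Mz) \<Longrightarrow> t \<in> {0..W} \<Longrightarrow>
      norm (y (t + sk m) - z t) \<le> \<delta> * Q * Mz"
    using sampled_closed_loop_gap[OF W] by blast
  show ?thesis
  proof (rule that[of "Q * M0"])
    show "0 \<le> Q * M0" using Q M0 by simp
    fix sk \<delta> \<sigma> x y m t
    assume sk: "time_seq sk" and gaps: "\<forall>k. sk (Suc k) - sk k \<le> \<delta>" and \<delta>: "\<delta> \<le> W"
      and \<sigma>: "\<sigma> \<in> PC" and y: "sampled_traj T f K sk \<sigma> x y" and r: "norm (y (sk m)) \<le> r"
      and t: "t \<in> {sk m..sk m + W}"
    define a where "a = sk m"
    have \<sigma>': "(\<lambda>s. \<sigma> (s + a)) \<in> PC" using PC_shift[OF \<sigma> time_seq_nonneg[OF sk]] by (simp add: a_def)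
    obtain z where z: "closed_loop_traj T f K (\<lambda>s. \<sigma> (s + a)) (y a) z" "continuous_on UNIV z"
      "mild_solution T (\<lambda>s. f (\<sigma> (s + a)) (z s) (K (z s))) (y a) z"
      using closed_loop_traj_exists[OF \<sigma>'] by blast
    have z_decay: "norm (z s) \<le> M0 * exp (- l0 * s) * norm (y a)" if "0 \<le> s" for s
      using stable[OF \<sigma>' _ z(1) that] r by (simp add: a_def)
    have z_bound: "norm (z s) \<le> M0 * norm (y a)" if "0 \<le> s" for s
      using z_decay[OF that] mult_left_le[of "exp (- l0 * s)" "M0 * norm (y a)"] that l0 M0
      by (simp add: mult.commute mult.left_commute)
    have "norm (y (t - a + sk m) - z (t - a)) \<le> \<delta> * Q * (M0 * norm (y a))"
      by (rule gap[OF sk gaps \<delta> \<sigma> y z(2) z(3)[unfolded a_def] z_bound]) (use t in \<open>simp_all add: a_def\<close>)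
    then have "norm (y t - z (t - a)) \<le> \<delta> * (Q * M0) * norm (y a)"
      by (simp add: a_def ac_simps)
    moreover have "norm (z (t - a)) \<le> M0 * exp (- l0 * (t - a)) * norm (y a)"
      using z_decay t by (simp add: a_def)
    ultimately show "norm (y t) \<le> (M0 * exp (- l0 * (t - sk m)) + \<delta> * (Q * M0)) * norm (y (sk m))"
      using norm_triangle_sub[of "y t" "z (t - a)"] by (simp add: a_def algebra_simps)
  qed
qed

end


section \<open>Exponential decay from a contraction over sampling windows\<close>

lemma half_power_le_exp:
  assumes W: "0 < W" and s: "s \<le> real (Suc j) * W"
  shows "(1 / 2 :: real) ^ j \<le> 2 * exp (- (ln 2 / W) * s)"
proof -
  have "exp (real (Suc j) * ln 2) = 2 ^ Suc j"
    by (subst exp_of_nat_mult) simp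
  then have "(1 / 2 :: real) ^ j = 2 * exp (- (real (Suc j) * ln 2))"
    by (simp add: exp_minus power_one_over inverse_eq_divide)
  also have "\<dots> \<le> 2 * exp (- (ln 2 / W) * s)"
  proof -
    have "s * ln 2 \<le> real (Suc j) * W * ln 2" using s by (intro mult_right_mono) auto
    then have "- (real (Suc j) * ln 2) \<le> - (ln 2 / W) * s" using W by (simp add: field_simps)
    then show ?thesis by simp
  qed
  finally show ?thesis .
qed

lemma time_seq_spaced_subsequence:
  assumes sk: "time_seq sk" and gaps: "\<forall>k. sk (Suc k) - sk k \<le> \<delta>" and \<tau>: "0 \<le> \<tau>"
  obtains a where "a 0 = 0" "\<And>j. a j \<in> range sk"
    "\<And>j. a j + \<tau> \<le> a (Suc j)" "\<And>j. a (Suc j) \<le> a j + \<tau> + \<delta>"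
proof -
  have "\<exists>m'. sk m + \<tau> \<le> sk m' \<and> sk m' \<le> sk m + \<tau> + \<delta>" for m
  proof -
    have "0 \<le> sk m + \<tau>" using time_seq_nonneg[OF sk, of m] \<tau> by linarith
    from next_sample_after[OF sk gaps this] show ?thesis by blast
  qed
  then obtain nxt where "\<And>m. sk m + \<tau> \<le> sk (nxt m)" "\<And>m. sk (nxt m) \<le> sk m + \<tau> + \<delta>"
    by metis
  with sk show ?thesis
    by (intro that[of "\<lambda>j. sk ((nxt ^^ j) 0)"]) (auto simp: time_seq_def)
qed

lemma exp_decay_from_halving:
  fixes a :: "nat \<Rightarrow> real" and v :: "real \<Rightarrow> real"
  assumes a: "a 0 = 0" "\<And>j. a j + \<tau> \<le> a (Suc j)" "\<And>j. a (Suc j) \<le> a j + W" and \<tau>: "0 < \<tau>"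
    and c: "1 \<le> c" and nonneg: "\<And>t. 0 \<le> v t"
    and window: "\<And>j s. v (a j) \<le> v 0 \<Longrightarrow> s \<in> {a j..a (Suc j)} \<Longrightarrow> v s \<le> c * v (a j)"
    and half: "\<And>j. v (a j) \<le> v 0 \<Longrightarrow> v (a (Suc j)) \<le> v (a j) / 2"
    and t: "0 \<le> t"
  shows "v t \<le> 2 * c * exp (- (ln 2 / W) * t) * v 0"
proof -
  have W: "0 < W" using a(2,3)[of 0] \<tau> by linarith
  have "v (a j) \<le> (1 / 2) ^ j * v 0 \<and> real j * \<tau> \<le> a j \<and> a j \<le> real j * W \<and>
      (\<forall>s\<in>{0..a j}. v s \<le> 2 * c * exp (- (ln 2 / W) * s) * v 0)" for j
  proof (induction j)
    case 0
    have "v 0 \<le> 2 * c * v 0" using c nonneg[of 0] by (simp add: mult_le_cancel_right1)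
    then show ?case using a(1) by simp
  next
    case (Suc j)
    then have va: "v (a j) \<le> (1 / 2) ^ j * v 0" and pos: "real j * \<tau> \<le> a j" "a j \<le> real j * W"
      and before: "\<forall>s\<in>{0..a j}. v s \<le> 2 * c * exp (- (ln 2 / W) * s) * v 0" by auto
    have "(1 / 2) ^ j * v 0 \<le> v 0"
      by (rule mult_left_le_one_le[OF nonneg]) (simp_all add: power_le_one)
    then have small: "v (a j) \<le> v 0" using va by linarith
    have "v s \<le> 2 * c * exp (- (ln 2 / W) * s) * v 0" if s: "s \<in> {a j..a (Suc j)}" for s
    proof -
      have "v s \<le> c * v (a j)" using window[OF small s] .
      also have "\<dots> \<le> c * ((1 / 2) ^ j * v 0)" using va c by (intro mult_left_mono) auto
      also have "\<dots> \<le> c * (2 * exp (- (ln 2 / W) * s) * v 0)"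
        using half_power_le_exp[OF W, of s j] s a(3)[of j] pos c nonneg[of 0]
        by (intro mult_left_mono mult_right_mono) (auto simp: algebra_simps)
      finally show ?thesis by (simp add: ac_simps)
    qed
    then show ?case
      using half[OF small] va before pos a(2,3)[of j] by (force simp: algebra_simps)
  qed
  moreover obtain j :: nat where "t / \<tau> \<le> j" using real_arch_simple by blast
  then have "t \<le> real j * \<tau>" using \<tau> by (simp add: field_simps)
  ultimately show ?thesis using t by (meson atLeastAtMost_iff order_trans)
qed

lemma exp_le_quarter:
  fixes M l s :: real
  assumes M: "0 < M" and l: "0 < l" and s: "ln (4 * M + 1) / l \<le> s"
  shows "M * exp (- l * s) \<le> 1 / 4"
proof -
  have "ln (4 * M + 1) \<le> l * s" using s l by (simp add: field_simps)
  then have "exp (- l * s) \<le> exp (- ln (4 * M + 1))" by simp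
  also have "\<dots> = 1 / (4 * M + 1)" using M by (simp add: exp_minus inverse_eq_divide)
  finally have "M * exp (- l * s) \<le> M * (1 / (4 * M + 1))"
    using M by (intro mult_left_mono) auto
  also have "\<dots> \<le> 1 / 4" using M by (simp add: field_simps)
  finally show ?thesis .
qed

lemma (in closed_loop_system) sampled_traj_exp_stable:
  assumes M0: "0 < M0" and l0: "0 < l0"
    and stable: "\<And>\<sigma> x z t. \<sigma> \<in> PC \<Longrightarrow> norm x \<le> r \<Longrightarrow> closed_loop_traj T f K \<sigma> x z \<Longrightarrow> 0 \<le> t \<Longrightarrow>
      norm (z t) \<le> M0 * exp (- l0 * t) * norm x"
  obtains \<delta>star where "0 < \<delta>star"
    "\<And>sk \<delta>. time_seq sk \<Longrightarrow> \<forall>k. sk (Suc k) - sk k \<le> \<delta> \<Longrightarrow> \<delta> < \<delta>star \<Longrightarrow>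
      \<exists>M' lam'. 0 < M' \<and> 0 < lam' \<and> (\<forall>t\<ge>0. \<forall>x \<sigma> y. norm x \<le> r \<longrightarrow> \<sigma> \<in> PC \<longrightarrow>
        sampled_traj T f K sk \<sigma> x y \<longrightarrow> norm (y t) \<le> M' * exp (- lam' * t) * norm x)"
proof -
  define \<tau> where "\<tau> = ln (4 * M0 + 1) / l0"
  have \<tau>: "0 < \<tau>" using M0 l0 by (simp add: \<tau>_def)
  define W where "W = \<tau> + 1"
  obtain Q where Q: "0 \<le> Q" and window:
    "\<And>sk \<delta> \<sigma> x y m t. time_seq sk \<Longrightarrow> \<forall>k. sk (Suc k) - sk k \<le> \<delta> \<Longrightarrow> \<delta> \<le> W \<Longrightarrow>
      \<sigma> \<in> PC \<Longrightarrow> sampled_traj T f K sk \<sigma> x y \<Longrightarrow> norm (y (sk m)) \<le> r \<Longrightarrow> t \<in> {sk m..sk m + W} \<Longrightarrow>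
      norm (y t) \<le> (M0 * exp (- l0 * (t - sk m)) + \<delta> * Q) * norm (y (sk m))"
    using sampled_traj_window_decay[of W M0 l0 r] \<tau> M0 l0 stable by (auto simp: W_def)
  show ?thesis
  proof (rule that[of "1 / (4 * Q + 1)"])
    show "0 < 1 / (4 * Q + 1)" using Q by simp
    fix sk \<delta> assume sk: "time_seq sk" and gaps: "\<forall>k. sk (Suc k) - sk k \<le> \<delta>" and "\<delta> < 1 / (4 * Q + 1)"
    then have "\<delta> + 4 * (\<delta> * Q) < 1" using Q by (simp add: field_simps)
    moreover have "0 \<le> \<delta>" using gaps[rule_format, of 0] time_seq_less[OF sk, of 0 "Suc 0"] by simp
    moreover have "0 \<le> \<delta> * Q" using \<open>0 \<le> \<delta>\<close> Q by simp
    ultimately have \<delta>: "\<delta> * Q \<le> 1 / 4" "\<delta> \<le> W" "\<tau> + \<delta> \<le> W" using \<tau> by (auto simp: W_def)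
    obtain a where a: "a 0 = 0" "\<And>j. a j \<in> range sk"
      "\<And>j. a j + \<tau> \<le> a (Suc j)" "\<And>j. a (Suc j) \<le> a j + \<tau> + \<delta>"
      using time_seq_spaced_subsequence[OF sk gaps less_imp_le[OF \<tau>]] by blast
    show "\<exists>M' lam'. 0 < M' \<and> 0 < lam' \<and> (\<forall>t\<ge>0. \<forall>x \<sigma> y. norm x \<le> r \<longrightarrow> \<sigma> \<in> PC \<longrightarrow>
        sampled_traj T f K sk \<sigma> x y \<longrightarrow> norm (y t) \<le> M' * exp (- lam' * t) * norm x)"
    proof (rule exI[of _ "2 * (M0 + 1)"], rule exI[of _ "ln 2 / W"], intro conjI allI impI)
      show "0 < 2 * (M0 + 1)" "0 < ln 2 / W" using M0 \<tau> by (simp_all add: W_def)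
      fix t :: real and x \<sigma> y assume t: "0 \<le> t" and x: "norm x \<le> r" and \<sigma>: "\<sigma> \<in> PC"
        and y: "sampled_traj T f K sk \<sigma> x y"
      have y0: "y 0 = x" using y by (simp add: sampled_traj_def)
      have near: "norm (y s) \<le> (M0 * exp (- l0 * (s - a j)) + 1 / 4) * norm (y (a j))"
        if "norm (y (a j)) \<le> norm (y 0)" "s \<in> {a j..a (Suc j)}" for j s
      proof -
        obtain m where m: "a j = sk m" using a(2)[of j] by auto
        have "s \<in> {sk m..sk m + W}" using that(2) a(4)[of j] \<delta>(3) m by auto
        then have "norm (y s) \<le> (M0 * exp (- l0 * (s - a j)) + \<delta> * Q) * norm (y (a j))"
          using window[OF sk gaps \<delta>(2) \<sigma> y] that(1) x y0 m by simp
        also have "\<dots> \<le> (M0 * exp (- l0 * (s - a j)) + 1 / 4) * norm (y (a j))"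
          using \<delta>(1) by (intro mult_right_mono) auto
        finally show ?thesis .
      qed
      show "norm (y t) \<le> 2 * (M0 + 1) * exp (- (ln 2 / W) * t) * norm x"
        unfolding y0[symmetric]
      proof (rule exp_decay_from_halving[OF a(1,3) _ \<tau> _ _ _ _ t])
        show "a (Suc j) \<le> a j + W" for j using a(4)[of j] \<delta>(3) by simp
        fix j assume small: "norm (y (a j)) \<le> norm (y 0)"
        show "norm (y s) \<le> (M0 + 1) * norm (y (a j))" if "s \<in> {a j..a (Suc j)}" for s
        proof -
          have "M0 * exp (- l0 * (s - a j)) \<le> M0" using that M0 l0 by (simp add: mult_left_le)
          then have "(M0 * exp (- l0 * (s - a j)) + 1 / 4) * norm (y (a j)) \<le> (M0 + 1) * norm (y (a j))"
            by (intro mult_right_mono) auto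
          then show ?thesis using near[OF small that] by linarith
        qed
        have "M0 * exp (- l0 * (a (Suc j) - a j)) \<le> 1 / 4"
          using a(3)[of j] by (intro exp_le_quarter[OF M0 l0]) (simp add: \<tau>_def)
        then have "(M0 * exp (- l0 * (a (Suc j) - a j)) + 1 / 4) * norm (y (a j)) \<le> 1 / 2 * norm (y (a j))"
          by (intro mult_right_mono) auto
        moreover have "a (Suc j) \<in> {a j..a (Suc j)}" using a(3)[of j] \<tau> by simp
        ultimately show "norm (y (a (Suc j))) \<le> norm (y (a j)) / 2"
          using near[OF small] by fastforce
      qed (use M0 in simp_all)
    qed
  qed
qed

theorem theorem8:
  fixes T :: "real \<Rightarrow> 'x::banach \<Rightarrow> 'x"
    and f :: "'q \<Rightarrow> 'x \<Rightarrow> 'u::banach \<Rightarrow> 'x"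
    and K :: "'x \<Rightarrow> 'u"
    and M lam :: "real \<Rightarrow> real"
    and Lf :: real
  assumes group: "C0_group T"
    and Lf_pos: "Lf > 0"
    and f_lip: "\<forall>q. lipschitz_on Lf UNIV (\<lambda>(x, u). f q x u)"
    and f_zero: "\<forall>q. f q 0 0 = 0"
    and K_lip: "\<exists>LK. lipschitz_on LK UNIV K"
    and K_zero: "K 0 = 0"
    and M_lam_pos: "\<forall>r>0. M r > 0 \<and> lam r > 0"
    and USGES: "\<forall>r>0. \<forall>t\<ge>0. \<forall>x \<sigma> y. norm x \<le> r \<longrightarrow> \<sigma> \<in> PC \<longrightarrow>
                   closed_loop_traj T f K \<sigma> x y \<longrightarrow>
                   norm (y t) \<le> M r * exp (- lam r * t) * norm x"
    and M_growth: "filterlim (\<lambda>r. r / M r) at_top at_top"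
  shows "\<forall>r>0. \<exists>\<delta>star>0. \<forall>sk. time_seq sk \<longrightarrow>
           (\<exists>\<delta><\<delta>star. \<forall>k. sk (Suc k) - sk k \<le> \<delta>) \<longrightarrow>
           (\<exists>M' lam'. M' > 0 \<and> lam' > 0 \<and>
              (\<forall>t\<ge>0. \<forall>x \<sigma> y. norm x \<le> r \<longrightarrow> \<sigma> \<in> PC \<longrightarrow>
                 sampled_traj T f K sk \<sigma> x y \<longrightarrow>
                 norm (y t) \<le> M' * exp (- lam' * t) * norm x))"
proof (intro allI impI)
  fix r :: real assume r: "0 < r"
  obtain LK where LK: "lipschitz_on LK UNIV K" using K_lip by blast
  interpret closed_loop_system T f K Lf LK
    using group Lf_pos f_lip f_zero LK K_zero by unfold_locales auto
  show "\<exists>\<delta>star>0. \<forall>sk. time_seq sk \<longrightarrow> (\<exists>\<delta><\<delta>star. \<forall>k. sk (Suc k) - sk k \<le> \<delta>) \<longrightarrow>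
      (\<exists>M' lam'. M' > 0 \<and> lam' > 0 \<and> (\<forall>t\<ge>0. \<forall>x \<sigma> y. norm x \<le> r \<longrightarrow> \<sigma> \<in> PC \<longrightarrow>
        sampled_traj T f K sk \<sigma> x y \<longrightarrow> norm (y t) \<le> M' * exp (- lam' * t) * norm x))"
  proof (rule sampled_traj_exp_stable[of "M r" "lam r" r])
    show "0 < M r" "0 < lam r" using M_lam_pos r by auto
    show "norm (z t) \<le> M r * exp (- lam r * t) * norm x"
      if "\<sigma> \<in> PC" "norm x \<le> r" "closed_loop_traj T f K \<sigma> x z" "0 \<le> t" for \<sigma> x z t
      using USGES r that by blast
  qed blast
qed

end
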